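(* Let $K$ be a non-Archimedean locally compact field of characteristic $p>0$ with group of 1-units $U=1+M_K$. Let $\Lambda_0$ be the set of group automorphisms $f:U\to U$ that are locally analytic on $U$. Then $(\Lambda_0,\circ)$ is isomorphic to $(\mathbb{Z}_p^*,\cdot)$ (via $y\mapsto(u\mapsto u^y)$).
   Context: $M_K$ is the maximal ideal of the ring of integers $R_K$ of $K$; with constant field $\mathbb{F}$ of order $q$ and uniformizer $\pi$, $K=\mathbb{F}((\pi))$ and $U=1+\pi\mathbb{F}[[\pi]]$, with absolute value $|x|=q^{-v(x)}$. A continuous function $f$ on a ball $B_{\alpha,t}=\{u\in R_K:|u-\alpha|\le t\}$, $t=|\rho|$, is analytic there if $f(u)=\sum_{n\ge0}c_n\left(\frac{u-\alpha}{\rho}\right)^n$ with $c_n\in K$, $c_n\to0$; $f:U\to K$ is locally analytic if each $\alpha\in U$ has a ball $B_{\alpha,t_\alpha}\subset U$, $t_\alpha>0$, on which $f$ is analytic. For $y\in\mathbb{Z}_p$ and $u=1+x\in U$, $u^y=\sum_{n\ge0}\binom{y}{n}x^n$. $\mathbb{Z}_p^*$ denotes the group of $p$-adic units. *)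

theory Defs
  imports "HOL-Computational_Algebra.Formal_Laurent_Series" "HOL-Algebra.Group" "HOL-Library.FuncSet"
begin

text \<open>The local field K = F((pi)) is modelled as the type of formal Laurent series
  over a finite field 'a (the constant field F, of order q = CARD('a)); its
  characteristic is p = CHAR('a).  Valuation v = fls_subdegree, |x| = q^(-v x).\<close>

text \<open>small m x  iff  |x| <= q^(-m)  (i.e. v(x) >= m, with v(0) = infinity).\<close>
definition small :: "int \<Rightarrow> 'a::field fls \<Rightarrow> bool" where
  "small m x \<longleftrightarrow> x = 0 \<or> m \<le> fls_subdegree x"

definition fls_lim :: "(nat \<Rightarrow> 'a::field fls) \<Rightarrow> 'a fls \<Rightarrow> bool" where
  "fls_lim s L \<longleftrightarrow> (\<forall>m::int. \<exists>N. \<forall>n\<ge>N. small m (s n - L))"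

definition fls_sums :: "(nat \<Rightarrow> 'a::field fls) \<Rightarrow> 'a fls \<Rightarrow> bool" where
  "fls_sums c S \<longleftrightarrow> fls_lim (\<lambda>N. \<Sum>n<N. c n) S"

definition RK :: "'a::field fls set" where
  "RK = {u. small 0 u}"

definition one_units :: "'a::field fls set" where
  "one_units = {u. small 1 (u - 1)}"

text \<open>Closed ball B_{alpha,t} = {u in R_K. |u - alpha| <= t}, with t = |rho|.\<close>
definition fls_ball :: "'a::field fls \<Rightarrow> 'a fls \<Rightarrow> 'a fls set" where
  "fls_ball \<alpha> \<rho> = {u \<in> RK. small (fls_subdegree \<rho>) (u - \<alpha>)}"

definition analytic_on_ball :: "('a::field fls \<Rightarrow> 'a fls) \<Rightarrow> 'a fls \<Rightarrow> 'a fls \<Rightarrow> bool" where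
  "analytic_on_ball f \<alpha> \<rho> \<longleftrightarrow>
     (\<exists>c :: nat \<Rightarrow> 'a fls. fls_lim c 0 \<and>
        (\<forall>u \<in> fls_ball \<alpha> \<rho>. fls_sums (\<lambda>n. c n * ((u - \<alpha>) / \<rho>) ^ n) (f u)))"

definition locally_analytic_U :: "('a::field fls \<Rightarrow> 'a fls) \<Rightarrow> bool" where
  "locally_analytic_U f \<longleftrightarrow>
     (\<forall>\<alpha> \<in> one_units. \<exists>\<rho>. \<rho> \<noteq> 0 \<and> fls_ball \<alpha> \<rho> \<subseteq> one_units \<and> analytic_on_ball f \<alpha> \<rho>)"

text \<open>p-adic integers Z_p as compatible sequences of residues y k in {0..<p^k}.\<close>
definition Zp :: "nat \<Rightarrow> (nat \<Rightarrow> int) set" where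
  "Zp p = {y. \<forall>k. 0 \<le> y k \<and> y k < int p ^ k \<and> y k = y (Suc k) mod int p ^ k}"

definition Zp_mult :: "nat \<Rightarrow> (nat \<Rightarrow> int) \<Rightarrow> (nat \<Rightarrow> int) \<Rightarrow> nat \<Rightarrow> int" where
  "Zp_mult p y z = (\<lambda>k. (y k * z k) mod int p ^ k)"

definition Zp_one :: "nat \<Rightarrow> nat \<Rightarrow> int" where
  "Zp_one p = (\<lambda>k. 1 mod int p ^ k)"

text \<open>Units Z_p^*: elements not divisible by p.\<close>
definition Zp_units :: "nat \<Rightarrow> (nat \<Rightarrow> int) set" where
  "Zp_units p = {y \<in> Zp p. y 1 \<noteq> 0}"

definition Zp_units_group :: "nat \<Rightarrow> (nat \<Rightarrow> int) monoid" where
  "Zp_units_group p = \<lparr>carrier = Zp_units p, mult = Zp_mult p, one = Zp_one p\<rparr>"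

text \<open>The p-adic binomial coefficient binom(y,n) in Z_p: its residue mod p^k is
  (Y choose n) mod p^k for any natural Y congruent to y mod p^(k+n).\<close>
definition Zp_binom :: "nat \<Rightarrow> (nat \<Rightarrow> int) \<Rightarrow> nat \<Rightarrow> nat \<Rightarrow> int" where
  "Zp_binom p y n = (\<lambda>k. int ((nat (y (k + n)) choose n) mod p ^ k))"

text \<open>u^y = sum_n binom(y,n) x^n for u = 1 + x, binom(y,n) read in F via Z_p -> F_p.\<close>
definition Zp_pow :: "(nat \<Rightarrow> int) \<Rightarrow> 'a::field fls \<Rightarrow> 'a fls" where
  "Zp_pow y u = (THE S. fls_sums (\<lambda>n. of_int (Zp_binom CHAR('a) y n 1) * (u - 1) ^ n) S)"

definition Lambda0 :: "('a::field fls \<Rightarrow> 'a fls) set" where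
  "Lambda0 = {f. f \<in> extensional one_units \<and> bij_betw f one_units one_units \<and>
                 (\<forall>u \<in> one_units. \<forall>v \<in> one_units. f (u * v) = f u * f v) \<and>
                 locally_analytic_U f}"

definition Lambda0_group :: "('a::field fls \<Rightarrow> 'a fls) monoid" where
  "Lambda0_group = \<lparr>carrier = Lambda0, mult = (\<lambda>f g. restrict (f \<circ> g) one_units),
                     one = restrict id one_units\<rparr>"

end

theory Submission
  imports Defs
begin

text \<open>
  For a power series A with A(0) = 1, the map u \<mapsto> A(u - 1) is an endomorphism of U exactly when
  A(x + z + xz) = A(x) A(z) formally.  The binomial series (1 + X)^y, y \<in> \<int>_p, have this property.
  Conversely, such an A over \<FF> has Frobenius-fixed coefficients and satisfies (1 + X) A' = A_1 A,
  so A = (1 + X)^y_0 C(X^p) with y_0 < p and C again multiplicative; iterating yields the p-adic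
  digits of an exponent y with A = (1 + X)^y.

  A locally analytic automorphism f satisfies f(u^p) = f(u)^p.  Comparing the expansions of both
  sides at 1 by an identity principle shows that the Taylor coefficients of f at 1 are
  Frobenius-fixed, i.e. f(u) = A(u - 1) near 1 for a series A over \<FF>_p.  Since u \<mapsto> u^(p^k) is
  injective on U and maps U into any given neighbourhood of 1, the identity holds on all of U;
  hence A is multiplicative, f is a power map, and surjectivity of f makes the exponent a unit.
\<close>

unbundle fps_syntax

section \<open>Frobenius in characteristic p\<close>

lemma prime_CHAR_finite_field: "prime CHAR('a::{field,finite})"
  by (intro prime_CHAR_semidom finite_imp_CHAR_pos) simp

lemma CHAR_finite_field_ge_2: "2 \<le> CHAR('a::{field,finite})"
  using prime_CHAR_finite_field prime_ge_2_nat by blast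

lemma less_power_self:
  assumes "2 \<le> (p::nat)" shows "n < p ^ n"
proof -
  have "n < 2 ^ n" by (rule less_exp)
  also have "(2::nat) ^ n \<le> p ^ n" using assms by (rule power_mono) simp
  finally show ?thesis .
qed

lemma less_CHAR_power_Suc: "n < CHAR('a::{field,finite}) ^ Suc n"
proof -
  have "n < CHAR('a) ^ n" by (rule less_power_self[OF CHAR_finite_field_ge_2])
  also have "\<dots> \<le> CHAR('a) ^ Suc n" using CHAR_finite_field_ge_2[where 'a='a] by (intro power_increasing) auto
  finally show ?thesis .
qed

lemma power_CHAR_diff:
  fixes x y :: "'a::comm_ring_1"
  assumes "prime CHAR('a)"
  shows "(x - y) ^ CHAR('a) = x ^ CHAR('a) - y ^ CHAR('a)"
  using freshmans_dream[OF assms refl, of x "-y"] minus_power_prime_CHAR[OF refl assms, of y] by simp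

lemma power_CHAR_inj:
  fixes x y :: "'a::idom"
  assumes "prime CHAR('a)" "x ^ CHAR('a) = y ^ CHAR('a)"
  shows "x = y"
  using power_CHAR_diff[OF assms(1), of x y] assms by (simp add: prime_gt_0_nat)

lemma power_CHAR_power_inj:
  fixes x y :: "'a::idom"
  assumes "prime CHAR('a)" "x ^ (CHAR('a) ^ k) = y ^ (CHAR('a) ^ k)"
  shows "x = y"
  using assms(2)
proof (induction k arbitrary: x y)
  case (Suc k)
  have "(x ^ CHAR('a)) ^ (CHAR('a) ^ k) = (y ^ CHAR('a)) ^ (CHAR('a) ^ k)"
    using Suc.prems by (simp add: power_mult[symmetric])
  hence "x ^ CHAR('a) = y ^ CHAR('a)" by (rule Suc.IH)
  thus ?case by (rule power_CHAR_inj[OF assms(1)])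
qed simp

lemma of_nat_power_CHAR:
  assumes "prime CHAR('a::comm_semiring_1)"
  shows "(of_nat i :: 'a) ^ CHAR('a) = of_nat i"
proof (induction i)
  case 0 thus ?case using assms by (simp add: power_0_left prime_gt_0_nat)
next
  case (Suc i)
  thus ?case using freshmans_dream[OF assms refl, of "of_nat i" 1] by (simp add: add.commute)
qed

lemma of_nat_mod_CHAR: "(of_nat (m mod CHAR('a)) :: 'a::semiring_1) = of_nat m"
proof -
  have "(of_nat m :: 'a) = of_nat (m mod CHAR('a) + CHAR('a) * (m div CHAR('a)))" by simp
  also have "\<dots> = of_nat (m mod CHAR('a))" by (simp only: of_nat_add of_nat_mult of_nat_CHAR) simp
  finally show ?thesis by simp
qed

text \<open>The Frobenius-fixed points are the roots of X^p - X, and the prime field already supplies p of them.\<close>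
lemma power_CHAR_eq_self_imp_of_nat:
  fixes x :: "'a::field"
  assumes prime: "prime CHAR('a)" and x: "x ^ CHAR('a) = x"
  shows "\<exists>i<CHAR('a). x = of_nat i"
proof -
  define p where "p = CHAR('a)"
  have p2: "2 \<le> p" unfolding p_def using prime prime_ge_2_nat by blast
  define Q where "Q = (monom 1 p - [:0, 1:] :: 'a poly)"
  have "coeff Q p = 1" unfolding Q_def using p2 by (simp add: coeff_pCons split: nat.split)
  hence Q0: "Q \<noteq> 0" by auto
  have "degree Q \<le> max (degree (monom (1::'a) p)) (degree [:0, 1::'a:])"
    unfolding Q_def by (rule degree_diff_le_max)
  hence dQ: "degree Q \<le> p" using p2 by (simp add: degree_monom_eq)
  define S where "S = {x. poly Q x = 0}"
  have S: "S = {x. x ^ p = x}" unfolding S_def Q_def by (auto simp: poly_monom)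
  have cS: "card S \<le> p" using card_poly_roots_bound[OF Q0] dQ unfolding S_def by simp
  have fS: "finite S" unfolding S_def by (rule poly_roots_finite[OF Q0])
  have sub: "of_nat ` {..<p} \<subseteq> S" unfolding S p_def using of_nat_power_CHAR[OF prime] by auto
  have "inj_on (of_nat :: nat \<Rightarrow> 'a) {..<p}"
  proof (rule linorder_inj_onI)
    fix i j assume "i < j" "j \<in> {..<p}"
    hence "\<not> p dvd (j - i)" by (auto dest: dvd_imp_le)
    hence "(of_nat (j - i) :: 'a) \<noteq> 0" unfolding p_def by (simp add: of_nat_eq_0_iff_char_dvd)
    thus "(of_nat i :: 'a) \<noteq> of_nat j" using \<open>i < j\<close> by (simp add: of_nat_diff)
  qed auto
  hence "card (of_nat ` {..<p} :: 'a set) = card S" using card_image card_mono[OF fS sub] cS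
    by (metis card_lessThan le_antisym)
  hence "of_nat ` {..<p} = S" by (rule card_subset_eq[OF fS sub])
  thus ?thesis using x unfolding S p_def by auto
qed

section \<open>Coefficients of formal power series\<close>

lemma sum_mult_delta:
  fixes f :: "nat \<Rightarrow> 'a::semiring_1"
  assumes "finite S"
  shows "(\<Sum>k\<in>S. f k * (if j = k then 1 else 0)) = (if j \<in> S then f j else 0)"
  using assms by (simp add: if_distrib[of "\<lambda>x. f _ * x"] cong: if_cong)

lemma fps_mult_nth_cong:
  assumes "\<forall>j\<le>n. f$j = f'$j" "\<forall>j\<le>n. g$j = g'$j"
  shows "(f * g)$n = (f' * g')$n"
  using assms by (auto simp: fps_mult_nth intro!: sum.cong)

lemma fps_power_nth_cong:
  assumes "\<forall>j\<le>n. f$j = g$j" "k \<le> n"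
  shows "(f ^ i)$k = (g ^ i)$k"
  using assms(2)
proof (induction i arbitrary: k)
  case (Suc i)
  have "(f * f ^ i)$k = (g * g ^ i)$k"
    by (rule fps_mult_nth_cong) (use assms(1) Suc in auto)
  thus ?case by simp
qed simp

lemma fps_compose_nth_cong:
  assumes "\<forall>j\<le>n. a$j = a'$j" "\<forall>j\<le>n. b$j = b'$j"
  shows "(a oo b)$n = (a' oo b')$n"
  using assms fps_power_nth_cong[OF assms(2)] by (auto simp: fps_compose_nth intro!: sum.cong)

lemma fps_mult_nth_eq_left:
  fixes f g :: "'a::comm_ring_1 fps"
  assumes "\<forall>j<N. g$j = (1::'a fps)$j" "n < N"
  shows "(f * g)$n = f$n"
proof -
  have "(f * g)$n = (f * 1)$n" by (rule fps_mult_nth_cong) (use assms in auto)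
  thus ?thesis by simp
qed

lemma fps_compose_X_power_nth:
  fixes b :: "'a::comm_semiring_1 fps"
  assumes "0 < q"
  shows "(b oo fps_X ^ q) $ k = (if q dvd k then b $ (k div q) else 0)"
proof -
  have "(b oo fps_X ^ q) $ k = (\<Sum>i\<in>{0..k}. b $ i * (if k = q * i then 1 else 0))"
    by (simp add: fps_compose_nth power_mult[symmetric] mult.commute)
  also have "\<dots> = (if q dvd k then b $ (k div q) else 0)"
  proof (cases "q dvd k")
    case True
    then obtain i where i: "k = q * i" by blast
    have ik: "i \<in> {0..k}" using assms i by (auto simp: Suc_le_eq)
    have "(\<Sum>i'\<in>{0..k}. b $ i' * (if k = q * i' then 1 else 0)) = b $ i"
      by (subst sum.remove[OF _ ik]) (use assms i in \<open>auto intro!: sum.neutral\<close>)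
    thus ?thesis using True i assms by simp
  qed (auto intro!: sum.neutral)
  finally show ?thesis .
qed

lemma fps_compose_X_power_nth_below:
  fixes b :: "'a::comm_semiring_1 fps"
  assumes "b$0 = 1" "0 < q"
  shows "\<forall>j<q. (b oo fps_X ^ q)$j = (1::'a fps)$j"
  using assms by (auto simp: fps_compose_X_power_nth dvd_imp_le)

definition fps_frob :: "'a::comm_semiring_1 fps \<Rightarrow> 'a fps" where
  "fps_frob f = Abs_fps (\<lambda>n. (f$n) ^ CHAR('a))"

lemma fps_power_CHAR:
  fixes f :: "'a::comm_semiring_1 fps"
  assumes prime: "prime CHAR('a)"
  shows "f ^ CHAR('a) = fps_frob f oo fps_X ^ CHAR('a)"
proof (rule fps_ext)
  fix k
  define p where "p = CHAR('a)"
  define t where "t = (\<Sum>i\<in>{0..k}. fps_const (f$i) * fps_X ^ i)"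
  have "\<forall>j\<le>k. t$j = f$j"
    unfolding t_def by (auto simp: fps_sum_nth sum_mult_delta)
  hence "(f ^ p) $ k = (t ^ p) $ k"
    using fps_power_nth_cong[of k f t] by auto
  also have "t ^ p = (\<Sum>i\<in>{0..k}. (fps_const (f$i) * fps_X ^ i) ^ p)"
    unfolding t_def p_def by (rule freshmans_dream_sum) (simp_all add: prime)
  also have "\<dots> = (\<Sum>i\<in>{0..k}. fps_const ((f$i)^p) * fps_X ^ (p * i))"
    by (simp add: power_mult_distrib fps_const_power power_mult[symmetric] mult.commute)
  also have "\<dots> $ k = (\<Sum>i\<in>{0..k}. (f$i)^p * (if k = p * i then 1 else 0))"
    by (simp add: fps_sum_nth)
  also have "\<dots> = (fps_frob f oo fps_X ^ p) $ k"
    by (simp add: fps_compose_nth power_mult[symmetric] mult.commute fps_frob_def p_def)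
  finally show "(f ^ CHAR('a)) $ k = (fps_frob f oo fps_X ^ CHAR('a)) $ k" unfolding p_def .
qed

section \<open>The series (1 + X)^Y in characteristic p\<close>

lemma one_plus_X_power_nth: "((1 + fps_X :: 'a::comm_ring_1 fps) ^ n) $ k = of_nat (n choose k)"
proof -
  have "(1 + fps_X :: 'a fps) ^ n = (\<Sum>i\<le>n. of_nat (n choose i) * fps_X ^ i * 1 ^ (n - i))"
    using binomial_ring[of "fps_X :: 'a fps" 1 n] by (simp add: add.commute)
  thus ?thesis
    by (auto simp: fps_sum_nth fps_of_nat[symmetric] binomial_eq_0 sum_mult_delta)
qed

lemma one_plus_X_compose: "x$0 = 0 \<Longrightarrow> (1 + fps_X :: 'a::comm_ring_1 fps) oo x = 1 + x"
  by (simp add: fps_compose_add_distrib)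

lemma one_plus_X_power_compose:
  "x$0 = 0 \<Longrightarrow> (1 + fps_X :: 'a::idom fps) ^ n oo x = (1 + x) ^ n"
  by (simp add: fps_compose_power[symmetric] one_plus_X_compose)

lemma one_plus_X_power_CHAR_power_mult:
  assumes "prime CHAR('a::idom)"
  shows "(1 + fps_X :: 'a fps) ^ (CHAR('a) ^ k * m) = (1 + fps_X) ^ m oo fps_X ^ (CHAR('a) ^ k)"
proof -
  have p: "CHAR('a) > 0" using assms prime_gt_0_nat by blast
  hence q: "CHAR('a) ^ k > 0" by simp
  have "prime CHAR('a fps)" using assms by simp
  from freshmans_dream'[OF this refl, where x=1 and y=fps_X and n=k]
  have "(1 + fps_X :: 'a fps) ^ (CHAR('a) ^ k) = 1 + fps_X ^ (CHAR('a) ^ k)" by simp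
  hence "(1 + fps_X :: 'a fps) ^ (CHAR('a) ^ k * m) = (1 + fps_X ^ (CHAR('a) ^ k)) ^ m"
    by (simp add: power_mult)
  also have "1 + fps_X ^ (CHAR('a) ^ k) = (1 + fps_X :: 'a fps) oo fps_X ^ (CHAR('a) ^ k)"
    using p by (simp add: one_plus_X_compose)
  also have "(\<dots>) ^ m = (1 + fps_X) ^ m oo fps_X ^ (CHAR('a) ^ k)"
    by (rule fps_compose_power) (use q in simp)
  finally show ?thesis .
qed

lemma one_plus_X_power_nth_mod:
  assumes "prime CHAR('a::idom)" "n < CHAR('a) ^ k"
  shows "((1 + fps_X :: 'a fps) ^ Y) $ n = ((1 + fps_X :: 'a fps) ^ (Y mod CHAR('a) ^ k)) $ n"
proof -
  define q where "q = CHAR('a) ^ k"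
  have q0: "0 < q" unfolding q_def using assms(1) prime_gt_0_nat by auto
  have "(1 + fps_X :: 'a fps) ^ Y = (1 + fps_X) ^ (Y mod q) * (1 + fps_X) ^ (q * (Y div q))"
    by (simp flip: power_add)
  also have "(1 + fps_X :: 'a fps) ^ (q * (Y div q)) = (1 + fps_X) ^ (Y div q) oo fps_X ^ q"
    unfolding q_def by (rule one_plus_X_power_CHAR_power_mult[OF assms(1)])
  finally have split: "(1 + fps_X :: 'a fps) ^ Y = (1 + fps_X) ^ (Y mod q) * ((1 + fps_X) ^ (Y div q) oo fps_X ^ q)" .
  have "\<forall>j<q. ((1 + fps_X :: 'a fps) ^ (Y div q) oo fps_X ^ q)$j = (1::'a fps)$j"
    by (rule fps_compose_X_power_nth_below[OF _ q0]) (simp add: one_plus_X_power_nth)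
  from fps_mult_nth_eq_left[OF this assms(2)[folded q_def]] show ?thesis unfolding split q_def .
qed

lemma one_plus_X_power_nth_cong:
  assumes "prime CHAR('a::idom)" "Y mod CHAR('a) ^ k = Y' mod CHAR('a) ^ k" "n < CHAR('a) ^ k"
  shows "((1 + fps_X :: 'a fps) ^ Y) $ n = ((1 + fps_X :: 'a fps) ^ Y') $ n"
  using one_plus_X_power_nth_mod[OF assms(1,3), of Y] one_plus_X_power_nth_mod[OF assms(1,3), of Y'] assms(2)
  by simp

text \<open>The coefficient at X yields the last base-p digit of Y; the rest is (1 + X)^(Y div p) in X^p.\<close>
lemma one_plus_X_power_eq_one_below:
  assumes prime: "prime CHAR('a::idom)" and "Y < CHAR('a) ^ k"
    and "\<forall>n<CHAR('a) ^ k. ((1 + fps_X :: 'a fps) ^ Y) $ n = (1::'a fps) $ n"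
  shows "Y = 0"
  using assms(2,3)
proof (induction k arbitrary: Y)
  case (Suc k)
  define p where "p = CHAR('a)"
  have p2: "2 \<le> p" unfolding p_def using prime prime_ge_2_nat by blast
  define Y0 Y1 where "Y0 = Y mod p" and "Y1 = Y div p"
  have YY: "Y = Y0 + p * Y1" unfolding Y0_def Y1_def by simp
  have Y1: "Y1 < p ^ k" using Suc.prems(1) unfolding Y1_def p_def
    by (simp add: less_mult_imp_div_less mult.commute)
  have split: "(1 + fps_X :: 'a fps) ^ Y = (1 + fps_X) ^ Y0 * ((1 + fps_X) ^ Y1 oo fps_X ^ p)"
    using one_plus_X_power_CHAR_power_mult[OF prime, of 1 Y1] unfolding YY p_def by (simp add: power_add)
  have "1 < p ^ Suc k" using p2 by (intro one_less_power) auto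
  hence "((1 + fps_X :: 'a fps) ^ Y) $ 1 = 0" using Suc.prems(2) unfolding p_def by auto
  moreover have "\<forall>j<p. ((1 + fps_X :: 'a fps) ^ Y1 oo fps_X ^ p)$j = (1::'a fps)$j"
    by (rule fps_compose_X_power_nth_below) (use p2 in \<open>auto simp: one_plus_X_power_nth\<close>)
  from fps_mult_nth_eq_left[OF this, of 1 "(1 + fps_X) ^ Y0"]
  have "((1 + fps_X :: 'a fps) ^ Y) $ 1 = ((1 + fps_X :: 'a fps) ^ Y0) $ 1" using p2 by (simp add: split)
  ultimately have "(of_nat Y0 :: 'a) = 0" by (simp add: one_plus_X_power_nth)
  hence "p dvd Y0" unfolding p_def by (simp add: of_nat_eq_0_iff_char_dvd)
  hence Y00: "Y0 = 0" unfolding Y0_def by (simp add: dvd_eq_mod_eq_0)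
  have "((1 + fps_X :: 'a fps) ^ Y1) $ n = (1::'a fps) $ n" if n: "n < p ^ k" for n
  proof -
    have "p * n < p ^ Suc k" using n p2 by simp
    hence "((1 + fps_X :: 'a fps) ^ Y) $ (p * n) = (1::'a fps) $ (p * n)"
      using Suc.prems(2) unfolding p_def by blast
    thus ?thesis using p2 by (auto simp: split Y00 fps_compose_X_power_nth)
  qed
  hence "Y1 = 0" using Suc.IH[OF Y1[unfolded p_def]] unfolding p_def by blast
  thus ?case using YY Y00 by simp
qed simp

lemma one_plus_X_power_nth_inj:
  assumes prime: "prime CHAR('a::field)" and "Y < CHAR('a) ^ k" "Y' < CHAR('a) ^ k"
    and "\<forall>n<CHAR('a) ^ k. ((1 + fps_X :: 'a fps) ^ Y) $ n = ((1 + fps_X :: 'a fps) ^ Y') $ n"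
  shows "Y = Y'"
proof -
  have "Y = Y'" if le: "Y' \<le> Y" and Y: "Y < CHAR('a) ^ k"
    and eq: "\<forall>n<CHAR('a) ^ k. ((1 + fps_X :: 'a fps) ^ Y) $ n = ((1 + fps_X :: 'a fps) ^ Y') $ n" for Y Y'
  proof -
    define I where "I = inverse ((1 + fps_X :: 'a fps) ^ Y')"
    have I: "I * (1 + fps_X) ^ Y' = 1" unfolding I_def by (simp add: inverse_mult_eq_1)
    have "I * (1 + fps_X) ^ Y = (I * (1 + fps_X) ^ Y') * (1 + fps_X) ^ (Y - Y')"
      using le by (simp add: mult.assoc flip: power_add)
    hence quot: "(1 + fps_X :: 'a fps) ^ (Y - Y') = I * (1 + fps_X) ^ Y" using I by simp
    have "\<forall>n<CHAR('a) ^ k. ((1 + fps_X :: 'a fps) ^ (Y - Y')) $ n = (1::'a fps) $ n"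
    proof (intro allI impI)
      fix n assume "n < CHAR('a) ^ k"
      hence "(I * (1 + fps_X) ^ Y) $ n = (I * (1 + fps_X) ^ Y') $ n"
        by (intro fps_mult_nth_cong) (use eq in auto)
      thus "((1 + fps_X :: 'a fps) ^ (Y - Y')) $ n = (1::'a fps) $ n" unfolding quot I .
    qed
    hence "Y - Y' = 0" by (intro one_plus_X_power_eq_one_below[OF prime]) (use Y in auto)
    thus ?thesis using le by simp
  qed
  thus ?thesis using assms by (metis nat_le_linear)
qed

section \<open>Endomorphisms of the multiplicative formal group\<close>

text \<open>A is an endomorphism of the multiplicative formal group law x + z + xz; for A(0) = 1 this says
  that u \<mapsto> A(u - 1) is multiplicative on 1 + X R[[X]].\<close>
definition formal_mult_hom :: "'a::comm_ring_1 fps \<Rightarrow> bool" where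
  "formal_mult_hom A \<longleftrightarrow>
     (\<forall>x z. x$0 = 0 \<longrightarrow> z$0 = 0 \<longrightarrow> A oo (x + z + x * z) = (A oo x) * (A oo z))"

lemma formal_mult_homD:
  "formal_mult_hom A \<Longrightarrow> x$0 = 0 \<Longrightarrow> z$0 = 0 \<Longrightarrow> A oo (x + z + x * z) = (A oo x) * (A oo z)"
  unfolding formal_mult_hom_def by blast

lemma formal_mult_hom_one_plus_X_power: "formal_mult_hom ((1 + fps_X :: 'a::idom fps) ^ n)"
  unfolding formal_mult_hom_def
proof (intro allI impI)
  fix x z :: "'a fps" assume x: "x$0 = 0" and z: "z$0 = 0"
  have "(x + z + x * z)$0 = 0" using x z by simp
  hence "(1 + fps_X) ^ n oo (x + z + x * z) = (1 + (x + z + x * z)) ^ n" by (rule one_plus_X_power_compose)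
  also have "\<dots> = ((1 + x) * (1 + z)) ^ n" by (simp add: algebra_simps)
  also have "\<dots> = ((1 + fps_X) ^ n oo x) * ((1 + fps_X) ^ n oo z)"
    using x z by (simp add: one_plus_X_power_compose power_mult_distrib)
  finally show "(1 + fps_X) ^ n oo (x + z + x * z) = ((1 + fps_X) ^ n oo x) * ((1 + fps_X) ^ n oo z)" .
qed

lemma formal_mult_hom_mult:
  fixes A B :: "'a::idom fps"
  assumes "formal_mult_hom A" "formal_mult_hom B"
  shows "formal_mult_hom (A * B)"
  unfolding formal_mult_hom_def
proof (intro allI impI)
  fix x z :: "'a fps" assume x: "x$0 = 0" and z: "z$0 = 0"
  have "(x + z + x * z)$0 = 0" using x z by simp
  thus "A * B oo (x + z + x * z) = (A * B oo x) * (A * B oo z)"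
    using formal_mult_homD[OF assms(1) x z] formal_mult_homD[OF assms(2) x z] x z
    by (simp add: fps_compose_mult_distrib mult_ac)
qed

lemma formal_mult_hom_inverse:
  fixes A :: "'a::field fps"
  assumes "formal_mult_hom A" "A$0 \<noteq> 0"
  shows "formal_mult_hom (inverse A)"
  unfolding formal_mult_hom_def
proof (intro allI impI)
  fix x z :: "'a fps" assume x: "x$0 = 0" and z: "z$0 = 0"
  have "(x + z + x * z)$0 = 0" using x z by simp
  thus "inverse A oo (x + z + x * z) = (inverse A oo x) * (inverse A oo z)"
    using formal_mult_homD[OF assms(1) x z] x z assms(2)
    by (simp add: fps_inverse_compose fps_inverse_mult)
qed

lemma formal_mult_hom_compose_power:
  fixes A :: "'a::idom fps"
  assumes A: "formal_mult_hom A" "A$0 = 1" and x: "x$0 = 0"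
  shows "A oo ((1 + x) ^ n - 1) = (A oo x) ^ n"
proof (induction n)
  case (Suc n)
  define w where "w = (1 + x) ^ n - 1"
  have w: "w$0 = 0" unfolding w_def using x by (simp add: fps_power_zeroth)
  have "(1 + x) ^ Suc n - 1 = w + x + w * x" unfolding w_def by (simp add: algebra_simps)
  hence "A oo ((1 + x) ^ Suc n - 1) = (A oo w) * (A oo x)"
    using formal_mult_homD[OF A(1) w x] by simp
  thus ?case using Suc.IH unfolding w_def by (simp add: mult.commute)
qed (simp add: assms)

lemma formal_mult_hom_fps_frob:
  fixes A :: "'a::idom fps"
  assumes prime: "prime CHAR('a)" and A: "formal_mult_hom A" "A$0 = 1"
  shows "fps_frob A = A"
proof (rule fps_ext)
  fix n
  define p where "p = CHAR('a)"
  have p0: "0 < p" unfolding p_def using prime prime_gt_0_nat by blast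
  have "(1 + fps_X :: 'a fps) ^ p - 1 = fps_X ^ p"
    using one_plus_X_power_CHAR_power_mult[OF prime, of 1 1] p0 unfolding p_def
    by (simp add: one_plus_X_compose)
  hence "A oo fps_X ^ p = A oo ((1 + fps_X) ^ p - 1)" by (simp only:)
  also have "\<dots> = (A oo fps_X) ^ p" by (rule formal_mult_hom_compose_power[OF A]) simp
  also have "\<dots> = A ^ p" by simp
  also have "\<dots> = fps_frob A oo fps_X ^ p" unfolding p_def by (rule fps_power_CHAR[OF prime])
  finally have "(A oo fps_X ^ p) $ (p * n) = (fps_frob A oo fps_X ^ p) $ (p * n)" by simp
  thus "fps_frob A $ n = A $ n" using p0 by (simp add: fps_compose_X_power_nth)
qed

lemma fps_mult_nth_eq_0_below:
  fixes f g :: "'a::comm_semiring_1 fps"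
  assumes "\<forall>j<N. f$j = 0" "n < N"
  shows "(f * g)$n = 0"
  using assms by (auto simp: fps_mult_nth intro!: sum.neutral)

lemma fps_square_nth_eq_0_below:
  fixes h :: "'a::comm_semiring_1 fps"
  assumes h: "\<forall>j<s. h$j = 0" and n: "n < 2 * s"
  shows "(h * h)$n = 0"
  unfolding fps_mult_nth
proof (intro sum.neutral ballI)
  fix j assume "j \<in> {0..n}"
  hence "j < s \<or> n - j < s" using n by auto
  thus "h$j * h$(n - j) = 0" using h by auto
qed

lemma X_plus_power_nth_below:
  fixes h :: "'a::comm_ring_1 fps"
  assumes h: "\<forall>j<s. h$j = 0" and n: "n < 2 * s"
  shows "((fps_X + h) ^ i)$n = (fps_X ^ i + of_nat i * h * fps_X ^ (i - 1))$n"
  using n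
proof (induction i arbitrary: n)
  case (Suc i)
  define q where "q = (fps_X ^ i + of_nat i * h * fps_X ^ (i - 1) :: 'a fps)"
  have "(fps_X + h) * q = fps_X * fps_X ^ i + of_nat i * h * (fps_X * fps_X ^ (i - 1))
      + h * fps_X ^ i + of_nat i * (h * h) * fps_X ^ (i - 1)"
    unfolding q_def by (simp only: distrib_left distrib_right mult_ac add_ac)
  also have "fps_X * fps_X ^ (i - 1) = (if i = 0 then fps_X else fps_X ^ i :: 'a fps)"
    by (cases i) simp_all
  finally have eq: "(fps_X + h) * q = fps_X ^ Suc i + of_nat (Suc i) * h * fps_X ^ i
      + (h * h) * (of_nat i * fps_X ^ (i - 1))"
    by (cases "i = 0") (simp_all add: algebra_simps)
  have "((fps_X + h) ^ Suc i)$n = ((fps_X + h) * q)$n"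
    unfolding power_Suc by (rule fps_mult_nth_cong) (use Suc in \<open>auto simp: q_def\<close>)
  also have "\<dots> = (fps_X ^ Suc i + of_nat (Suc i) * h * fps_X ^ i)$n"
  proof -
    have "\<forall>j<2 * s. (h * h)$j = 0" using fps_square_nth_eq_0_below[OF h] by blast
    from fps_mult_nth_eq_0_below[OF this Suc.prems] show ?thesis unfolding eq by simp
  qed
  finally show ?case by simp
qed simp

text \<open>First-order Taylor expansion: the neglected terms are multiples of h^2, which vanish below X^(2s).\<close>
lemma fps_compose_X_plus_nth:
  fixes A h :: "'a::idom fps"
  assumes h: "\<forall>j<s. h$j = 0" and s: "0 < s" and n: "n < 2 * s"
  shows "(A oo (fps_X + h))$n = (A + h * fps_deriv A)$n"
proof -
  define T where "T = (\<Sum>i\<in>{0..n+1}. fps_const (A$i) * fps_X ^ i)"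
  have TA: "\<forall>j\<le>n+1. T$j = A$j"
    unfolding T_def by (auto simp: fps_sum_nth sum_mult_delta)
  have G0: "(fps_X + h) $ 0 = 0" using h s by simp
  have "T oo (fps_X + h) = (\<Sum>i\<in>{0..n+1}. fps_const (A$i) * (fps_X + h) ^ i)"
    unfolding T_def fps_compose_sum_distrib
    by (intro sum.cong refl) (simp add: fps_const_mult_apply_left[symmetric] fps_X_power_compose[OF G0])
  also have "\<dots> $ n = (\<Sum>i\<in>{0..n+1}. fps_const (A$i) * (fps_X ^ i + of_nat i * h * fps_X ^ (i - 1)))$n"
    unfolding fps_sum_nth fps_mult_left_const_nth
    by (intro sum.cong refl) (simp only: X_plus_power_nth_below[OF h n])
  also have "(\<Sum>i\<in>{0..n+1}. fps_const (A$i) * (fps_X ^ i + of_nat i * h * fps_X ^ (i - 1))) = T + h * fps_deriv T"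
    unfolding T_def fps_deriv_sum
    by (simp add: fps_deriv_power fps_of_nat sum.distrib sum_distrib_left distrib_left mult_ac)
  also have "(T + h * fps_deriv T)$n = (A + h * fps_deriv A)$n"
    using TA fps_mult_nth_cong[of n h h "fps_deriv T" "fps_deriv A"] by simp
  finally show ?thesis
    using fps_compose_nth_cong[of n A T "fps_X + h" "fps_X + h"] TA by simp
qed

lemma fps_compose_X_power_nth_below_twice:
  fixes A :: "'a::comm_semiring_1 fps"
  assumes "A$0 = 1" "0 < e" "j < 2 * e"
  shows "(A oo fps_X ^ e)$j = (1 + fps_const (A$1) * fps_X ^ e)$j"
proof (cases "e dvd j")
  case True
  then obtain q where q: "j = e * q" by blast
  have "q < 2" using assms(2,3) q by simp
  hence "q = 0 \<or> q = 1" by auto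
  thus ?thesis using q assms by (auto simp: fps_compose_X_power_nth)
next
  case False
  hence "j \<noteq> 0" "j \<noteq> e" by (metis dvd_0_right, metis dvd_refl)
  thus ?thesis using False assms by (simp add: fps_compose_X_power_nth)
qed

text \<open>Compare the coefficients of X^(k+e) in A(X + X^e + X^(e+1)) = A(X) A(X^e) for large e, expanding
  the left-hand side by Taylor.\<close>
lemma formal_mult_hom_deriv:
  fixes A :: "'a::idom fps"
  assumes hom: "formal_mult_hom A" and A0: "A$0 = 1"
  shows "(1 + fps_X) * fps_deriv A = fps_const (A$1) * A"
proof (rule fps_ext)
  fix k
  define e :: nat where "e = k + 3"
  define h where "h = (fps_X ^ e + fps_X ^ Suc e :: 'a fps)"
  have h: "\<forall>j<e. h$j = 0" and e0: "0 < e" and ke: "k + e < 2 * e"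
    unfolding h_def e_def by (auto simp del: power_Suc)
  have "A oo (fps_X + h) = A * (A oo fps_X ^ e)"
    using formal_mult_homD[OF hom, of fps_X "fps_X ^ e"] e0 by (simp add: h_def add.assoc)
  moreover have "(A oo (fps_X + h))$(k + e) = A$(k + e) + ((1 + fps_X) * fps_deriv A)$k"
  proof -
    have "h * fps_deriv A = fps_X ^ e * fps_deriv A + fps_X ^ e * (fps_X * fps_deriv A)"
      unfolding h_def by (simp add: algebra_simps)
    hence "(h * fps_deriv A)$(k + e) = fps_deriv A $ k + (fps_X * fps_deriv A) $ k"
      by (simp add: fps_X_power_mult_nth)
    thus ?thesis using fps_compose_X_plus_nth[OF h e0 ke, of A] by (simp add: algebra_simps)
  qed
  moreover have "(A * (A oo fps_X ^ e))$(k + e) = (A * (1 + fps_const (A$1) * fps_X ^ e))$(k + e)"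
    by (rule fps_mult_nth_cong) (use fps_compose_X_power_nth_below_twice[OF A0 e0] ke in auto)
  moreover have "A * (1 + fps_const (A$1) * fps_X ^ e) = A + fps_const (A$1) * (fps_X ^ e * A)"
    by (simp add: algebra_simps)
  ultimately show "((1 + fps_X) * fps_deriv A) $ k = (fps_const (A$1) * A) $ k"
    by (simp add: fps_X_power_mult_nth)
qed

lemma formal_mult_hom_coeff_1:
  fixes A :: "'a::field fps"
  assumes prime: "prime CHAR('a)" and A: "formal_mult_hom A" "A$0 = 1"
  shows "\<exists>y<CHAR('a). A$1 = of_nat y"
proof -
  have "fps_frob A $ 1 = A $ 1" using formal_mult_hom_fps_frob[OF prime A] by simp
  hence "(A$1) ^ CHAR('a) = A$1" by (simp add: fps_frob_def)
  thus ?thesis by (rule power_CHAR_eq_self_imp_of_nat[OF prime])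
qed

lemma fps_deriv_eq_0_imp_compose_X_CHAR:
  fixes D :: "'a::field fps"
  assumes prime: "prime CHAR('a)" and D: "fps_deriv D = 0"
  shows "D = Abs_fps (\<lambda>n. D $ (CHAR('a) * n)) oo fps_X ^ CHAR('a)"
proof (rule fps_ext)
  fix k
  have p0: "0 < CHAR('a)" using prime prime_gt_0_nat by blast
  show "D $ k = (Abs_fps (\<lambda>n. D $ (CHAR('a) * n)) oo fps_X ^ CHAR('a)) $ k"
  proof (cases "CHAR('a) dvd k")
    case False
    hence "k \<noteq> 0" "(of_nat k :: 'a) \<noteq> 0" by (metis dvd_0_right, simp add: of_nat_eq_0_iff_char_dvd)
    moreover have "of_nat k * D $ k = 0" using arg_cong[OF D, of "\<lambda>f. f $ (k - 1)"] \<open>k \<noteq> 0\<close> by simp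
    ultimately show ?thesis using False p0 by (simp add: fps_compose_X_power_nth)
  qed (use p0 in \<open>simp add: fps_compose_X_power_nth\<close>)
qed

text \<open>A multiplicative C(X^p) is the p-th power of C, and the Frobenius is injective, so C is
  multiplicative too.\<close>
lemma formal_mult_hom_compose_X_CHAR:
  fixes C :: "'a::field fps"
  assumes prime: "prime CHAR('a)" and hom: "formal_mult_hom (C oo fps_X ^ CHAR('a))" and C0: "C$0 = 1"
  shows "formal_mult_hom C"
proof -
  define p where "p = CHAR('a)"
  define D where "D = C oo fps_X ^ p"
  have p0: "0 < p" unfolding p_def using prime prime_gt_0_nat by blast
  have D: "formal_mult_hom D" "D$0 = 1" using hom C0 p0 unfolding D_def p_def by simp_all
  have "fps_frob C = C"
  proof (rule fps_ext)
    fix n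
    have "fps_frob D $ (p * n) = D $ (p * n)" using formal_mult_hom_fps_frob[OF prime D] by simp
    thus "fps_frob C $ n = C $ n" using p0 by (simp add: fps_frob_def D_def fps_compose_X_power_nth p_def)
  qed
  hence Cp: "C ^ p = D" using fps_power_CHAR[OF prime, of C] unfolding D_def p_def by simp
  show ?thesis
    unfolding formal_mult_hom_def
  proof (intro allI impI)
    fix x z :: "'a fps" assume x: "x$0 = 0" and z: "z$0 = 0"
    have w: "(x + z + x * z)$0 = 0" using x z by simp
    have "(C oo (x + z + x * z)) ^ CHAR('a fps) = ((C oo x) * (C oo z)) ^ CHAR('a fps)"
      using formal_mult_homD[OF D(1) x z]
      by (simp add: fps_compose_power[OF w] fps_compose_power[OF x] fps_compose_power[OF z]
                    power_mult_distrib Cp[unfolded p_def])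
    thus "C oo (x + z + x * z) = (C oo x) * (C oo z)"
      by (rule power_CHAR_inj[rotated]) (simp add: prime)
  qed
qed

text \<open>Peeling off the last p-adic digit: y is chosen so that A / (1 + X)^y has vanishing linear
  term, which by the differential equation makes it a series in X^p.\<close>
lemma formal_mult_hom_last_digit:
  fixes A :: "'a::field fps"
  assumes prime: "prime CHAR('a)" and A: "formal_mult_hom A" "A$0 = 1"
  shows "\<exists>y<CHAR('a). \<exists>C. formal_mult_hom C \<and> C$0 = 1 \<and> A = (1 + fps_X) ^ y * (C oo fps_X ^ CHAR('a))"
proof -
  obtain y where y: "y < CHAR('a)" "A$1 = of_nat y" using formal_mult_hom_coeff_1[OF prime A] by blast
  define P where "P = (1 + fps_X :: 'a fps) ^ y"
  define D where "D = inverse P * A"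
  have P0: "P$0 = 1" unfolding P_def by (simp add: one_plus_X_power_nth)
  hence AD: "A = P * D" unfolding D_def by (simp add: mult.assoc[symmetric] inverse_mult_eq_1')
  have D0: "D$0 = 1" unfolding D_def using P0 A by simp
  have "A$1 = D$1 + of_nat y" using AD P0 D0 by (simp add: P_def one_plus_X_power_nth fps_mult_nth_1)
  hence D1: "D$1 = 0" using y by simp
  have homD: "formal_mult_hom D" unfolding D_def P_def
    by (intro formal_mult_hom_mult formal_mult_hom_inverse formal_mult_hom_one_plus_X_power A(1))
       (simp add: one_plus_X_power_nth)
  have "(1 + fps_X) * fps_deriv D = 0" using formal_mult_hom_deriv[OF homD D0] D1 by simp
  moreover have "(1 + fps_X :: 'a fps) $ 0 \<noteq> 0" by simp
  hence "(1 + fps_X :: 'a fps) \<noteq> 0" by (metis fps_zero_nth)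
  ultimately have "fps_deriv D = 0" by simp
  define C where "C = Abs_fps (\<lambda>n. D $ (CHAR('a) * n))"
  have DC: "D = C oo fps_X ^ CHAR('a)"
    unfolding C_def by (rule fps_deriv_eq_0_imp_compose_X_CHAR[OF prime \<open>fps_deriv D = 0\<close>])
  have "C$0 = 1" using D0 by (simp add: C_def)
  moreover have "formal_mult_hom C"
    using formal_mult_hom_compose_X_CHAR[OF prime, of C] homD DC \<open>C$0 = 1\<close> by simp
  ultimately show ?thesis using y(1) AD DC unfolding P_def by blast
qed

lemma formal_mult_hom_digits:
  fixes A :: "'a::field fps"
  assumes prime: "prime CHAR('a)" and A: "formal_mult_hom A" "A$0 = 1"
  shows "\<exists>Y<CHAR('a)^k. \<exists>B. formal_mult_hom B \<and> B$0 = 1 \<and> A = (1 + fps_X)^Y * (B oo fps_X^(CHAR('a)^k))"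
proof (induction k)
  case 0
  show ?case by (intro exI[of _ 0] conjI exI[of _ A]) (use A in simp_all)
next
  case (Suc k)
  define p where "p = CHAR('a)"
  define q where "q = p ^ k"
  have p0: "0 < p" unfolding p_def using prime prime_gt_0_nat by blast
  hence q0: "0 < q" unfolding q_def by simp
  obtain Y B where Y: "Y < q" and B: "formal_mult_hom B" "B$0 = 1"
    and AB: "A = (1 + fps_X)^Y * (B oo fps_X^q)"
    using Suc.IH unfolding q_def p_def by blast
  obtain y C where y: "y < p" and C: "formal_mult_hom C" "C$0 = 1"
    and BC: "B = (1 + fps_X)^y * (C oo fps_X^p)"
    using formal_mult_hom_last_digit[OF prime B] unfolding p_def by blast
  have Xq: "(fps_X^q :: 'a fps)$0 = 0" and Xp: "(fps_X^p :: 'a fps)$0 = 0" using q0 p0 by simp_all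
  have "B oo fps_X^q = ((1 + fps_X)^y oo fps_X^q) * ((C oo fps_X^p) oo fps_X^q)"
    unfolding BC by (rule fps_compose_mult_distrib[OF Xq])
  also have "(1 + fps_X :: 'a fps)^y oo fps_X^q = (1 + fps_X)^(q * y)"
    unfolding q_def p_def by (rule one_plus_X_power_CHAR_power_mult[OF prime, symmetric])
  also have "(C oo fps_X^p) oo fps_X^q = C oo fps_X^(p^Suc k)"
    using fps_compose_assoc[OF Xq Xp] fps_X_power_compose[OF Xq, of p]
    by (simp add: q_def power_mult[symmetric] mult.commute)
  finally have "A = (1 + fps_X)^(Y + q * y) * (C oo fps_X^(p^Suc k))"
    unfolding AB by (simp only: power_add mult.assoc)
  moreover have "Y + q * y < p ^ Suc k"
  proof -
    have "q * Suc y \<le> q * p" using y by (intro mult_le_mono2) simp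
    hence "q * y + q \<le> q * p" by simp
    thus ?thesis using Y unfolding q_def by (simp add: mult.commute)
  qed
  ultimately show ?case using C unfolding p_def by blast
qed

section \<open>p-adic integers and binomial series\<close>

lemma Zp_nonneg: "y \<in> Zp p \<Longrightarrow> 0 \<le> y k"
  and Zp_less: "y \<in> Zp p \<Longrightarrow> y k < int p ^ k"
  and Zp_Suc_mod: "y \<in> Zp p \<Longrightarrow> y (Suc k) mod int p ^ k = y k"
  unfolding Zp_def by (blast, blast, metis (mono_tags, lifting) mem_Collect_eq)

lemma Zp_mod:
  assumes y: "y \<in> Zp p" and "j \<le> k"
  shows "y k mod int p ^ j = y j"
  using assms(2)
proof (induction k)
  case 0 thus ?case using Zp_nonneg[OF y, of 0] Zp_less[OF y, of 0] by simp
next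
  case (Suc k)
  show ?case
  proof (cases "j = Suc k")
    case True thus ?thesis using Zp_nonneg[OF y, of j] Zp_less[OF y, of j] by simp
  next
    case False
    hence jk: "j \<le> k" using Suc.prems by simp
    have "y (Suc k) mod int p ^ j = (y (Suc k) mod int p ^ k) mod int p ^ j"
      using jk by (simp add: le_imp_power_dvd mod_mod_cancel)
    also have "y (Suc k) mod int p ^ k = y k" using Zp_Suc_mod[OF y] .
    finally show ?thesis using Suc.IH jk by simp
  qed
qed

lemma Zp_mult_closed:
  assumes "y \<in> Zp p" "z \<in> Zp p" "0 < p"
  shows "Zp_mult p y z \<in> Zp p"
  unfolding Zp_def Zp_mult_def
proof (intro CollectI allI conjI)
  fix k
  show "0 \<le> y k * z k mod int p ^ k" "y k * z k mod int p ^ k < int p ^ k" using assms by simp_all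
  have "y (Suc k) * z (Suc k) mod int p ^ Suc k mod int p ^ k = y (Suc k) * z (Suc k) mod int p ^ k"
    by (simp add: le_imp_power_dvd mod_mod_cancel)
  also have "\<dots> = (y (Suc k) mod int p ^ k) * (z (Suc k) mod int p ^ k) mod int p ^ k"
    by (simp add: mod_mult_eq)
  also have "\<dots> = y k * z k mod int p ^ k" using Zp_Suc_mod[OF assms(1)] Zp_Suc_mod[OF assms(2)] by simp
  finally show "y k * z k mod int p ^ k = y (Suc k) * z (Suc k) mod int p ^ Suc k mod int p ^ k" by simp
qed

lemma Zp_mult_commute: "Zp_mult p y z = Zp_mult p z y"
  by (simp add: Zp_mult_def mult.commute)

lemma mod_inverse_unique:
  fixes a w w' m :: int
  assumes "0 \<le> w" "w < m" "0 \<le> w'" "w' < m" "(a * w) mod m = 1 mod m" "(a * w') mod m = 1 mod m"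
  shows "w = w'"
proof -
  have "w = (w * (1 mod m)) mod m" using assms by (simp add: mod_mult_right_eq)
  also have "\<dots> = ((a * w) * w') mod m"
    by (simp only: assms(6)[symmetric] mod_mult_right_eq) (simp add: mult_ac)
  also have "\<dots> = ((1 mod m) * w') mod m" by (simp only: assms(5)[symmetric] mod_mult_left_eq)
  also have "\<dots> = w'" using assms by (simp add: mod_mult_left_eq)
  finally show ?thesis .
qed

lemma Zp_units_residue_invertible:
  assumes y: "y \<in> Zp_units p" and prime: "prime p"
  shows "\<exists>w. 0 \<le> w \<and> w < int p ^ k \<and> (y k * w) mod int p ^ k = 1 mod int p ^ k"
proof -
  have yZ: "y \<in> Zp p" and y1: "y 1 \<noteq> 0" using y by (auto simp: Zp_units_def)
  have "coprime (y k) (int p ^ k)"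
  proof (cases "k = 0")
    case False
    hence "y k mod int p = y 1" using Zp_mod[OF yZ, of 1 k] by simp
    hence "\<not> int p dvd y k" using y1 by (metis dvd_eq_mod_eq_0)
    thus ?thesis using prime by (simp add: coprime_commute prime_imp_coprime)
  qed simp
  then obtain u v where "u * y k + v * int p ^ k = 1" using bezout_int[of "y k" "int p ^ k"] by auto
  hence "y k * u = 1 + (- v) * int p ^ k" by (simp add: algebra_simps)
  hence "(y k * u) mod int p ^ k = 1 mod int p ^ k" by (simp only: mod_mult_self1)
  hence "(y k * (u mod int p ^ k)) mod int p ^ k = 1 mod int p ^ k" by (simp add: mod_mult_right_eq)
  moreover have "0 < int p ^ k" using prime prime_gt_0_nat by simp
  ultimately show ?thesis by (intro exI[of _ "u mod int p ^ k"]) simp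
qed

lemma Zp_units_inverse:
  assumes y: "y \<in> Zp_units p" and prime: "prime p"
  shows "\<exists>z \<in> Zp_units p. Zp_mult p y z = Zp_one p"
proof -
  have yZ: "y \<in> Zp p" using y by (simp add: Zp_units_def)
  have p2: "2 \<le> p" using prime prime_ge_2_nat by blast
  hence ppos: "0 < int p ^ k" for k by simp
  have "\<exists>z. \<forall>k. 0 \<le> z k \<and> z k < int p ^ k \<and> (y k * z k) mod int p ^ k = 1 mod int p ^ k"
    using Zp_units_residue_invertible[OF y prime] by (intro choice allI)
  then obtain z where z: "\<And>k. 0 \<le> z k \<and> z k < int p ^ k \<and> (y k * z k) mod int p ^ k = 1 mod int p ^ k"
    by blast
  have "z k = z (Suc k) mod int p ^ k" for k
  proof (rule mod_inverse_unique[where a="y k" and m="int p ^ k"])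
    show "0 \<le> z (Suc k) mod int p ^ k" "z (Suc k) mod int p ^ k < int p ^ k" using ppos[of k] by auto
    have "(y k * (z (Suc k) mod int p ^ k)) mod int p ^ k = (y k * z (Suc k)) mod int p ^ k"
      by (simp add: mod_mult_right_eq)
    also have "\<dots> = ((y (Suc k) mod int p ^ k) * z (Suc k)) mod int p ^ k"
      using Zp_Suc_mod[OF yZ, of k] by simp
    also have "\<dots> = ((y (Suc k) * z (Suc k)) mod int p ^ Suc k) mod int p ^ k"
      by (simp add: mod_mult_left_eq le_imp_power_dvd mod_mod_cancel)
    also have "\<dots> = 1 mod int p ^ k" using z[of "Suc k"] by (simp add: le_imp_power_dvd mod_mod_cancel)
    finally show "(y k * (z (Suc k) mod int p ^ k)) mod int p ^ k = 1 mod int p ^ k" .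
  qed (use z in auto)
  hence "z \<in> Zp p" unfolding Zp_def using z by blast
  moreover have "z 1 \<noteq> 0" using z[of 1] p2 by auto
  moreover have "Zp_mult p y z = Zp_one p" using z by (auto simp: Zp_mult_def Zp_one_def)
  ultimately show ?thesis by (auto simp: Zp_units_def)
qed

text \<open>The series \<Sum>_n binom(y, n) X^n, so that Zp_pow y u is its value at u - 1.\<close>
definition Zp_binomial_fps :: "(nat \<Rightarrow> int) \<Rightarrow> 'a::{field,finite} fps" where
  "Zp_binomial_fps y = Abs_fps (\<lambda>n. of_int (Zp_binom CHAR('a) y n 1))"

lemma Zp_binomial_fps_nth:
  assumes y: "y \<in> Zp CHAR('a)" and n: "n < CHAR('a::{field,finite}) ^ k"
  shows "(Zp_binomial_fps y :: 'a fps) $ n = ((1 + fps_X) ^ nat (y k)) $ n"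
proof -
  define p where "p = CHAR('a)"
  define j where "j = min k (1 + n)"
  have "(Zp_binomial_fps y :: 'a fps) $ n = of_nat ((nat (y (1 + n)) choose n) mod p)"
    by (simp add: Zp_binomial_fps_def Zp_binom_def p_def)
  also have "\<dots> = ((1 + fps_X :: 'a fps) ^ nat (y (1 + n))) $ n"
    unfolding p_def by (simp add: of_nat_mod_CHAR one_plus_X_power_nth)
  also have "\<dots> = ((1 + fps_X :: 'a fps) ^ nat (y k)) $ n"
  proof (rule one_plus_X_power_nth_cong[OF prime_CHAR_finite_field, where k=j])
    have "nat (y i) mod p ^ j = nat (y j)" if "j \<le> i" for i
      using Zp_mod[OF y that] Zp_nonneg[OF y, of i] nat_mod_distrib[of "y i" "int p ^ j"]
      by (simp add: p_def nat_power_eq)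
    thus "nat (y (1 + n)) mod CHAR('a) ^ j = nat (y k) mod CHAR('a) ^ j" unfolding p_def j_def by simp
    show "n < CHAR('a) ^ j" using n less_CHAR_power_Suc[where 'a='a, of n] by (simp add: j_def min_def)
  qed
  finally show ?thesis .
qed

lemma Zp_binomial_fps_nth_below:
  assumes "y \<in> Zp CHAR('a)"
  shows "\<forall>j\<le>n. (Zp_binomial_fps y :: 'a::{field,finite} fps) $ j = ((1 + fps_X) ^ nat (y (Suc n))) $ j"
  using Zp_binomial_fps_nth[OF assms] less_CHAR_power_Suc[where 'a='a, of n] by (meson le_less_trans)

lemma Zp_binomial_fps_0 [simp]: "(Zp_binomial_fps y :: 'a::{field,finite} fps) $ 0 = 1"
  using CHAR_finite_field_ge_2[where 'a='a] by (simp add: Zp_binomial_fps_def Zp_binom_def)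

lemma formal_mult_hom_Zp_binomial_fps:
  assumes y: "y \<in> Zp CHAR('a)"
  shows "formal_mult_hom (Zp_binomial_fps y :: 'a::{field,finite} fps)"
  unfolding formal_mult_hom_def
proof (intro allI impI fps_ext)
  fix x z :: "'a fps" and n assume x: "x$0 = 0" and z: "z$0 = 0"
  define Q where "Q = (1 + fps_X :: 'a fps) ^ nat (y (Suc n))"
  have AQ: "\<forall>j\<le>n. (Zp_binomial_fps y :: 'a fps) $ j = Q $ j"
    unfolding Q_def by (rule Zp_binomial_fps_nth_below[OF y])
  have "(Zp_binomial_fps y oo (x + z + x * z)) $ n = (Q oo (x + z + x * z)) $ n"
    by (rule fps_compose_nth_cong) (use AQ in auto)
  also have "Q oo (x + z + x * z) = (Q oo x) * (Q oo z)"
    unfolding Q_def by (rule formal_mult_homD[OF formal_mult_hom_one_plus_X_power x z])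
  also have "((Q oo x) * (Q oo z)) $ n = ((Zp_binomial_fps y oo x) * (Zp_binomial_fps y oo z)) $ n"
    using AQ by (intro fps_mult_nth_cong allI impI fps_compose_nth_cong) auto
  finally show "(Zp_binomial_fps y oo (x + z + x * z)) $ n
      = ((Zp_binomial_fps y oo x) * (Zp_binomial_fps y oo z)) $ n" .
qed

lemma Zp_binomial_fps_Zp_mult:
  assumes y: "y \<in> Zp CHAR('a)" and z: "z \<in> Zp CHAR('a)"
  shows "(Zp_binomial_fps (Zp_mult CHAR('a) y z) :: 'a::{field,finite} fps)
           = Zp_binomial_fps y oo (Zp_binomial_fps z - 1)"
proof (rule fps_ext)
  fix n
  define p k where "p = CHAR('a)" and "k = Suc n"
  have yz: "Zp_mult p y z \<in> Zp p"
    using Zp_mult_closed[OF y z] CHAR_finite_field_ge_2[where 'a='a] unfolding p_def by simp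
  define Qy Qz where "Qy = (1 + fps_X :: 'a fps) ^ nat (y k)" and "Qz = (1 + fps_X :: 'a fps) ^ nat (z k)"
  have "(Zp_binomial_fps (Zp_mult p y z) :: 'a fps) $ n = ((1 + fps_X) ^ nat (Zp_mult p y z k)) $ n"
    using Zp_binomial_fps_nth_below[OF yz[unfolded p_def], of n] unfolding k_def p_def by simp
  also have "\<dots> = ((1 + fps_X :: 'a fps) ^ (nat (y k) * nat (z k))) $ n"
  proof (rule one_plus_X_power_nth_cong[OF prime_CHAR_finite_field, where k=k])
    show "n < CHAR('a) ^ k" unfolding k_def by (rule less_CHAR_power_Suc)
    show "nat (Zp_mult p y z k) mod CHAR('a) ^ k = nat (y k) * nat (z k) mod CHAR('a) ^ k"
      using Zp_nonneg[OF y, of k] Zp_nonneg[OF z, of k] nat_mod_distrib[of "y k * z k" "int p ^ k"]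
      by (simp add: Zp_mult_def p_def nat_power_eq nat_mult_distrib)
  qed
  also have "(1 + fps_X :: 'a fps) ^ (nat (y k) * nat (z k)) = Qy oo (Qz - 1)"
  proof -
    have "(Qz - 1) $ 0 = 0" unfolding Qz_def by (simp add: one_plus_X_power_nth)
    hence "Qy oo (Qz - 1) = Qz ^ nat (y k)" unfolding Qy_def by (simp add: one_plus_X_power_compose)
    thus ?thesis unfolding Qz_def by (simp add: power_mult[symmetric] mult.commute)
  qed
  also have "(Qy oo (Qz - 1)) $ n = (Zp_binomial_fps y oo (Zp_binomial_fps z - 1)) $ n"
    using Zp_binomial_fps_nth_below[OF y, of n] Zp_binomial_fps_nth_below[OF z, of n]
    by (intro fps_compose_nth_cong) (auto simp: Qy_def Qz_def k_def)
  finally show "(Zp_binomial_fps (Zp_mult CHAR('a) y z) :: 'a fps) $ n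
      = (Zp_binomial_fps y oo (Zp_binomial_fps z - 1)) $ n" unfolding p_def .
qed

lemma Zp_binomial_fps_Zp_one: "(Zp_binomial_fps (Zp_one CHAR('a)) :: 'a::{field,finite} fps) = 1 + fps_X"
proof (rule fps_ext)
  fix n
  have "(1::nat) < CHAR('a) ^ (1 + n)"
    using CHAR_finite_field_ge_2[where 'a='a] by (intro one_less_power) auto
  hence "(1::int) < int CHAR('a) ^ (1 + n)" by (metis of_nat_1 of_nat_less_iff of_nat_power)
  hence "(1::int) mod int CHAR('a) ^ (1 + n) = 1" by simp
  thus "(Zp_binomial_fps (Zp_one CHAR('a)) :: 'a fps) $ n = (1 + fps_X) $ n"
    using CHAR_finite_field_ge_2[where 'a='a]
    by (cases n) (auto simp: Zp_binomial_fps_def Zp_binom_def Zp_one_def binomial_eq_0)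
qed

lemma Zp_binomial_fps_inj:
  assumes y: "y \<in> Zp CHAR('a)" and y': "y' \<in> Zp CHAR('a)"
    and eq: "(Zp_binomial_fps y :: 'a::{field,finite} fps) = Zp_binomial_fps y'"
  shows "y = y'"
proof
  fix k
  have "nat (y k) = nat (y' k)"
  proof (rule one_plus_X_power_nth_inj[OF prime_CHAR_finite_field[where 'a='a], where k=k])
    show "nat (y k) < CHAR('a) ^ k" "nat (y' k) < CHAR('a) ^ k"
      using Zp_less[OF y, of k] Zp_less[OF y', of k] Zp_nonneg[OF y, of k] Zp_nonneg[OF y', of k]
      by (simp_all add: nat_less_iff)
    show "\<forall>n<CHAR('a) ^ k. ((1 + fps_X :: 'a fps) ^ nat (y k)) $ n = ((1 + fps_X :: 'a fps) ^ nat (y' k)) $ n"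
      using Zp_binomial_fps_nth[OF y] Zp_binomial_fps_nth[OF y'] eq by metis
  qed
  thus "y k = y' k" using Zp_nonneg[OF y, of k] Zp_nonneg[OF y', of k] by simp
qed

definition formal_mult_hom_exponent :: "'a::{field,finite} fps \<Rightarrow> nat \<Rightarrow> int" where
  "formal_mult_hom_exponent A k =
     int (THE Y. Y < CHAR('a) ^ k \<and> (\<forall>n<CHAR('a) ^ k. A $ n = ((1 + fps_X :: 'a fps) ^ Y) $ n))"

lemma formal_mult_hom_exponent:
  fixes A :: "'a::{field,finite} fps"
  assumes A: "formal_mult_hom A" "A$0 = 1"
  shows "formal_mult_hom_exponent A k < CHAR('a) ^ k"
    and "\<forall>n<CHAR('a) ^ k. A $ n = ((1 + fps_X) ^ nat (formal_mult_hom_exponent A k)) $ n"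
proof -
  let ?P = "\<lambda>Y. Y < CHAR('a) ^ k \<and> (\<forall>n<CHAR('a) ^ k. A $ n = ((1 + fps_X :: 'a fps) ^ Y) $ n)"
  have "\<exists>Y. ?P Y"
  proof -
    obtain Y B where "Y < CHAR('a) ^ k" "B$0 = 1" and AB: "A = (1 + fps_X) ^ Y * (B oo fps_X ^ (CHAR('a) ^ k))"
      using formal_mult_hom_digits[OF prime_CHAR_finite_field A, of k] by blast
    moreover have "0 < CHAR('a) ^ k" using CHAR_finite_field_ge_2[where 'a='a] by simp
    ultimately show ?thesis
      using fps_mult_nth_eq_left[OF fps_compose_X_power_nth_below] by (metis AB)
  qed
  moreover have "Y = Y'" if "?P Y" "?P Y'" for Y Y'
    using that by (intro one_plus_X_power_nth_inj[OF prime_CHAR_finite_field[where 'a='a], where k=k]) auto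
  ultimately have "\<exists>!Y. ?P Y" by (rule ex_ex1I)
  hence "?P (THE Y. ?P Y)" by (rule theI')
  moreover have "formal_mult_hom_exponent A k = int (THE Y. ?P Y)"
    unfolding formal_mult_hom_exponent_def ..
  ultimately show "formal_mult_hom_exponent A k < CHAR('a) ^ k"
    and "\<forall>n<CHAR('a) ^ k. A $ n = ((1 + fps_X) ^ nat (formal_mult_hom_exponent A k)) $ n"
    by (auto simp only: nat_int of_nat_less_iff)
qed

lemma formal_mult_hom_exponent_Zp:
  fixes A :: "'a::{field,finite} fps"
  assumes A: "formal_mult_hom A" "A$0 = 1"
  shows "formal_mult_hom_exponent A \<in> Zp CHAR('a)"
  unfolding Zp_def
proof (intro CollectI allI conjI)
  fix k
  define e where "e = formal_mult_hom_exponent A"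
  define p where "p = CHAR('a)"
  have p0: "0 < p ^ k" unfolding p_def using CHAR_finite_field_ge_2[where 'a='a] by simp
  have e_nonneg: "0 \<le> e i" for i by (simp add: e_def formal_mult_hom_exponent_def)
  show "0 \<le> e k" "e k < int p ^ k" using formal_mult_hom_exponent(1)[OF A, of k] e_nonneg
    by (simp_all add: e_def p_def)
  have "nat (e k) = nat (e (Suc k)) mod p ^ k"
  proof (rule one_plus_X_power_nth_inj[OF prime_CHAR_finite_field[where 'a='a], where k=k])
    show "nat (e k) < CHAR('a) ^ k" "nat (e (Suc k)) mod p ^ k < CHAR('a) ^ k"
      using formal_mult_hom_exponent(1)[OF A, of k] p0 e_nonneg[of k] by (simp_all add: e_def p_def nat_less_iff)
    have "n < CHAR('a) ^ Suc k" if "n < CHAR('a) ^ k" for n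
      using that CHAR_finite_field_ge_2[where 'a='a] by (simp add: less_le_trans)
    thus "\<forall>n<CHAR('a) ^ k. ((1 + fps_X :: 'a fps) ^ nat (e k)) $ n
        = ((1 + fps_X :: 'a fps) ^ (nat (e (Suc k)) mod p ^ k)) $ n"
      using formal_mult_hom_exponent(2)[OF A] one_plus_X_power_nth_mod[OF prime_CHAR_finite_field]
      unfolding e_def p_def by metis
  qed
  also have "\<dots> = nat (e (Suc k) mod int p ^ k)"
    using e_nonneg nat_mod_distrib[of "e (Suc k)" "int p ^ k"] by (simp add: nat_power_eq)
  finally show "e k = e (Suc k) mod int p ^ k"
    using e_nonneg[of k] p0 by (simp add: eq_nat_nat_iff)
qed

lemma Zp_binomial_fps_formal_mult_hom_exponent:
  fixes A :: "'a::{field,finite} fps"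
  assumes A: "formal_mult_hom A" "A$0 = 1"
  shows "Zp_binomial_fps (formal_mult_hom_exponent A) = A"
proof (rule fps_ext)
  fix n
  have n: "n < CHAR('a) ^ Suc n" by (rule less_CHAR_power_Suc)
  show "(Zp_binomial_fps (formal_mult_hom_exponent A) :: 'a fps) $ n = A $ n"
    using Zp_binomial_fps_nth[OF formal_mult_hom_exponent_Zp[OF A] n]
      formal_mult_hom_exponent(2)[OF A, of "Suc n", rule_format, OF n] by simp
qed

section \<open>Valuation and convergence in \<FF>((\<pi>))\<close>

lemma small_iff: "small m x \<longleftrightarrow> (\<forall>i<m. x $$ i = 0)"
  unfolding small_def
  by (metis fls_eq0_below_subdegree fls_subdegree_geI fls_zero_nth le_less_trans not_le)

lemma small_0 [simp]: "small m 0"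
  by (simp add: small_def)

lemma small_add: "small m x \<Longrightarrow> small m z \<Longrightarrow> small m (x + z)"
  and small_diff: "small m x \<Longrightarrow> small m z \<Longrightarrow> small m (x - z)"
  and small_mono: "m' \<le> m \<Longrightarrow> small m x \<Longrightarrow> small m' x"
  by (simp_all add: small_iff)

lemma small_subdegree: "small (fls_subdegree x) x"
  by (simp add: small_def)

lemma small_mult:
  fixes x z :: "'a::field fls"
  shows "small a x \<Longrightarrow> small b z \<Longrightarrow> small (a + b) (x * z)"
  unfolding small_def by (cases "x = 0 \<or> z = 0") auto

lemma small_power:
  fixes x :: "'a::field fls"
  assumes "small a x" shows "small (int n * a) (x ^ n)"
proof (induction n)
  case (Suc n)
  from small_mult[OF assms Suc.IH] show ?case by (simp add: algebra_simps)
qed (simp add: small_def)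

lemma small_fls_const: "small 0 (fls_const c)"
  by (simp add: small_iff)

lemma fls_lim_iff: "fls_lim s L \<longleftrightarrow> (\<forall>m. \<exists>N. \<forall>n\<ge>N. \<forall>i<m. s n $$ i = L $$ i)"
  unfolding fls_lim_def small_iff by simp

lemma fls_lim_unique: assumes "fls_lim s L" "fls_lim s L'" shows "L = L'"
proof (rule fls_eqI)
  fix i
  obtain N N' where "\<forall>n\<ge>N. \<forall>j<i+1. s n $$ j = L $$ j" "\<forall>n\<ge>N'. \<forall>j<i+1. s n $$ j = L' $$ j"
    using assms unfolding fls_lim_iff by meson
  thus "L $$ i = L' $$ i" by (metis max.cobounded1 max.cobounded2 less_add_one)
qed

lemma fls_sums_unique: "fls_sums c S \<Longrightarrow> fls_sums c S' \<Longrightarrow> S = S'"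
  unfolding fls_sums_def by (rule fls_lim_unique)

lemma the_fls_sums: "fls_sums c S \<Longrightarrow> (THE S. fls_sums c S) = S"
  using fls_sums_unique by blast

lemma fls_lim_mult_left:
  fixes k :: "'a::field fls"
  assumes "fls_lim s L"
  shows "fls_lim (\<lambda>n. k * s n) (k * L)"
  unfolding fls_lim_def
proof
  fix m
  obtain N where N: "\<forall>n\<ge>N. small (m - fls_subdegree k) (s n - L)"
    using assms unfolding fls_lim_def by blast
  have "small m (k * s n - k * L)" if "N \<le> n" for n
    using small_mult[OF small_subdegree[of k] N[rule_format, OF that]] by (simp add: algebra_simps)
  thus "\<exists>N. \<forall>n\<ge>N. small m (k * s n - k * L)" by blast
qed

lemma fls_sums_mult_left:
  fixes k :: "'a::field fls"
  assumes "fls_sums c S"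
  shows "fls_sums (\<lambda>n. k * c n) (k * S)"
  using fls_lim_mult_left[OF assms[unfolded fls_sums_def], of k]
  by (simp add: fls_sums_def sum_distrib_left)

lemma fls_sums_diff:
  fixes a b :: "nat \<Rightarrow> 'a::field fls"
  assumes "fls_sums a S" "fls_sums b T"
  shows "fls_sums (\<lambda>n. a n - b n) (S - T)"
  unfolding fls_sums_def fls_lim_def
proof
  fix m
  obtain N N' where "\<forall>n\<ge>N. small m ((\<Sum>k<n. a k) - S)" "\<forall>n\<ge>N'. small m ((\<Sum>k<n. b k) - T)"
    using assms unfolding fls_sums_def fls_lim_def by meson
  hence "small m ((\<Sum>k<n. a k - b k) - (S - T))" if "max N N' \<le> n" for n
    using small_diff[of m "(\<Sum>k<n. a k) - S" "(\<Sum>k<n. b k) - T"] that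
    by (simp add: sum_subtractf algebra_simps)
  thus "\<exists>N. \<forall>n\<ge>N. small m ((\<Sum>k<n. a k - b k) - (S - T))" by blast
qed

lemma fls_sums_power_CHAR:
  fixes a :: "nat \<Rightarrow> 'a::{field,finite} fls"
  assumes "fls_sums a S"
  shows "fls_sums (\<lambda>n. a n ^ CHAR('a)) (S ^ CHAR('a))"
  unfolding fls_sums_def fls_lim_def
proof
  fix m
  define p where "p = CHAR('a)"
  have p2: "2 \<le> p" unfolding p_def by (rule CHAR_finite_field_ge_2)
  have prime: "prime CHAR('a fls)" by (simp add: prime_CHAR_finite_field)
  obtain N where N: "\<forall>n\<ge>N. small (max m 0) ((\<Sum>k<n. a k) - S)"
    using assms unfolding fls_sums_def fls_lim_def by blast
  have "small m ((\<Sum>k<n. a k ^ p) - S ^ p)" if "N \<le> n" for n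
  proof -
    have "((\<Sum>k<n. a k) - S) ^ p = (\<Sum>k<n. a k ^ p) - S ^ p"
      using power_CHAR_diff[OF prime] freshmans_dream_sum[OF prime refl] unfolding p_def by simp
    moreover have "m \<le> int p * max m 0" using p2 by (simp add: max_def mult_le_cancel_right1)
    ultimately show ?thesis
      using small_power[OF N[rule_format, OF that], of p] small_mono by metis
  qed
  thus "\<exists>N. \<forall>n\<ge>N. small m ((\<Sum>k<n. a k ^ CHAR('a)) - S ^ CHAR('a))" unfolding p_def by blast
qed

lemma fls_lim_zero_bounded:
  fixes c :: "nat \<Rightarrow> 'a::field fls"
  assumes "fls_lim c 0"
  shows "\<exists>B\<le>0. \<forall>n. small B (c n)"
proof -
  obtain N where N: "\<forall>n\<ge>N. small 0 (c n)" using assms unfolding fls_lim_def by force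
  define B where "B = Min (insert 0 ((\<lambda>n. fls_subdegree (c n)) ` {..<N}))"
  have "small B (c n)" for n
  proof (cases "n < N")
    case True
    hence "B \<le> fls_subdegree (c n)" unfolding B_def by (intro Min_le) auto
    thus ?thesis using small_mono small_subdegree by blast
  next
    case False
    moreover have "B \<le> 0" unfolding B_def by (intro Min_le) auto
    ultimately show ?thesis using N small_mono by (meson not_le less_imp_le)
  qed
  moreover have "B \<le> 0" unfolding B_def by (intro Min_le) auto
  ultimately show ?thesis by blast
qed

lemma fls_sums_fps_compose:
  fixes A :: "'a::field fps"
  assumes x0: "x $ 0 = 0"
  shows "fls_sums (\<lambda>n. fls_const (A$n) * fps_to_fls x ^ n) (fps_to_fls (A oo x))"
  unfolding fls_sums_def fls_lim_iff
proof (intro allI exI[of _ "nat _"] impI)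
  fix m :: int and n i assume n: "nat m \<le> n" and i: "i < m"
  have e: "(\<Sum>k<n. fls_const (A $ k) * fps_to_fls x ^ k) $$ i = (\<Sum>k<n. A $ k * (fps_to_fls (x ^ k)) $$ i)"
    by (simp add: fls_nth_sum fps_to_fls_power)
  show "(\<Sum>k<n. fls_const (A $ k) * fps_to_fls x ^ k) $$ i = fps_to_fls (A oo x) $$ i"
  proof (cases "i < 0")
    case False
    then obtain j where j: "i = int j" by (metis nonneg_int_cases not_less)
    have "(\<Sum>k<n. A $ k * (fps_to_fls (x ^ k)) $$ i) = (\<Sum>k\<in>{0..j}. A $ k * (x ^ k) $ j)"
      using j i n startsby_zero_power_prefix[OF x0]
      by (simp add: fps_to_fls_nth) (intro sum.mono_neutral_right; auto)
    thus ?thesis unfolding e by (simp add: j fps_to_fls_nth fps_compose_nth)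
  qed (simp add: e fps_to_fls_nth)
qed

text \<open>Identity principle: at the points \<pi>^(qj) with qj large, the leading term of the first nonzero
  coefficient cannot be cancelled by the others.\<close>
lemma fls_power_series_eq_0:
  fixes d :: "nat \<Rightarrow> 'a::field fls"
  assumes B: "\<forall>n. small B (d n)" and q: "0 < q"
    and S: "\<forall>j. fls_sums (\<lambda>n. d n * (fls_X ^ (q * j)) ^ n) 0"
  shows "d n = 0"
proof (rule ccontr)
  assume "d n \<noteq> 0"
  define n0 where "n0 = (LEAST n. d n \<noteq> 0)"
  have dn0: "d n0 \<noteq> 0" unfolding n0_def using \<open>d n \<noteq> 0\<close> by (rule LeastI)
  have below: "d i = 0" if "i < n0" for i using not_less_Least[OF that[unfolded n0_def]] by blast
  define v0 where "v0 = fls_subdegree (d n0)"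
  have Bv: "B \<le> v0" using B[rule_format, of n0] dn0 unfolding small_def v0_def by auto
  define E where "E = q * (nat (v0 - B) + 1)"
  have "1 * (nat (v0 - B) + 1) \<le> E" unfolding E_def using q by (intro mult_le_mono1) simp
  hence "int (nat (v0 - B) + 1) \<le> int E" by (simp only: mult_1 of_nat_le_iff)
  hence EB: "v0 - B < int E" using Bv by simp
  define i0 where "i0 = v0 + int E * int n0"
  from S[rule_format, of "nat (v0 - B) + 1"] obtain N where
    N: "\<forall>n'\<ge>N. \<forall>i<i0+1. (\<Sum>k<n'. d k * (fls_X ^ E) ^ k) $$ i = (0::'a fls) $$ i"
    unfolding fls_sums_def fls_lim_iff E_def by blast
  define N' where "N' = max N (Suc n0)"
  have n0: "n0 \<in> {..<N'}" by (simp add: N'_def)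
  have "(d k * (fls_X ^ E) ^ k) $$ i0 = 0" if "k \<in> {..<N'} - {n0}" for k
  proof (cases "k < n0")
    case False
    hence "Suc n0 \<le> k" using that by auto
    hence "int E * int (Suc n0) \<le> int E * int k" by (intro mult_left_mono) auto
    hence "i0 < B + int (E * k)" unfolding i0_def using EB by (simp add: algebra_simps)
    moreover have "small (B + int (E * k)) (d k * (fls_X ^ E) ^ k)"
      by (rule small_mult[OF B[rule_format]]) (simp add: small_def power_mult[symmetric])
    ultimately show ?thesis by (simp add: small_iff)
  qed (simp add: below)
  hence "(\<Sum>k<N'. d k * (fls_X ^ E) ^ k) $$ i0 = (d n0 * (fls_X ^ E) ^ n0) $$ i0"
    by (simp add: fls_nth_sum sum.remove[OF _ n0])
  also have "\<dots> = d n0 $$ v0"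
    by (simp add: power_mult[symmetric] fls_X_power_times_conv_shift i0_def mult.commute)
  finally show False using N dn0 unfolding N'_def v0_def by simp
qed

lemma fls_power_CHAR_eq_self:
  fixes a :: "'a::field fls"
  assumes prime: "prime CHAR('a)" and a: "a ^ CHAR('a) = a"
  shows "a = fls_const (a $$ 0)" "(a $$ 0) ^ CHAR('a) = a $$ 0"
proof -
  define p where "p = CHAR('a)"
  have p2: "2 \<le> p" unfolding p_def using prime prime_ge_2_nat by blast
  have prime': "prime CHAR('a fls)" using prime by simp
  have sd: "fls_subdegree a = 0"
  proof (cases "a = 0")
    case False
    hence "fls_subdegree a = int p * fls_subdegree a"
      using fls_subdegree_pow[of a p] a unfolding p_def by simp
    thus ?thesis using p2 by simp
  qed simp
  define r where "r = a - fls_const (a $$ 0)"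
  have r: "small 1 r" unfolding small_iff r_def using sd
    by (auto simp: not_less intro: fls_eq0_below_subdegree)
  have "a ^ p = fls_const ((a $$ 0) ^ p) + r ^ p"
    using freshmans_dream[OF prime' refl, of "fls_const (a $$ 0)" r] unfolding r_def p_def
    by (simp add: fls_const_power)
  moreover have "(r ^ p) $$ 0 = 0" using small_power[OF r, of p] p2 by (simp add: small_iff)
  ultimately have c: "(a $$ 0) ^ p = a $$ 0" using arg_cong[OF a, of "\<lambda>f. f $$ 0"] unfolding p_def by simp
  hence "a = fls_const (a $$ 0) + r ^ p" using \<open>a ^ p = _\<close> a unfolding p_def by (simp add: fls_const_power)
  hence "r ^ p = r" unfolding r_def by (metis add_diff_cancel_left')
  have "r = 0"
  proof (rule ccontr)
    assume "r \<noteq> 0"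
    hence "1 \<le> fls_subdegree r" using r by (simp add: small_def)
    hence "fls_subdegree r < int p * fls_subdegree r" using p2 by (simp add: mult_less_cancel_right1)
    moreover have "fls_subdegree r = int p * fls_subdegree r"
      using \<open>r ^ p = r\<close> fls_subdegree_pow[of r p] by simp
    ultimately show False by linarith
  qed
  thus "a = fls_const (a $$ 0)" "(a $$ 0) ^ CHAR('a) = a $$ 0" using c unfolding r_def p_def by simp_all
qed

section \<open>Evaluating power series at 1-units\<close>

lemma one_units_1 [simp]: "1 \<in> one_units"
  by (simp add: one_units_def)

lemma one_units_subdegree:
  fixes u :: "'a::field fls"
  assumes "u \<in> one_units" shows "u \<noteq> 0" "fls_subdegree u = 0" "small 0 u"
proof -
  have h: "\<forall>i<1. (u - 1) $$ i = 0" using assms by (simp add: one_units_def small_iff)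
  hence u0: "u $$ 0 = 1" by (metis fls_minus_nth fls_one_nth eq_iff_diff_eq_0 zero_less_one)
  thus "u \<noteq> 0" by auto
  have neg: "\<forall>i<0. u $$ i = 0" using h by auto
  show "fls_subdegree u = 0"
    by (intro antisym fls_subdegree_leI fls_subdegree_geI) (use u0 neg in auto)
  show "small 0 u" using neg by (simp add: small_iff)
qed

definition unit_coord :: "'a::field fls \<Rightarrow> 'a fps" where
  "unit_coord u = fls_regpart (u - 1)"

definition eval_at_unit :: "'a::field fps \<Rightarrow> 'a fls \<Rightarrow> 'a fls" where
  "eval_at_unit A u = fps_to_fls (A oo unit_coord u)"

lemma unit_coord:
  assumes "u \<in> one_units"
  shows "fps_to_fls (unit_coord u) = u - 1" "unit_coord u $ 0 = 0"
proof -
  have h: "\<forall>i<1. (u - 1) $$ i = 0" using assms by (simp add: one_units_def small_iff)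
  show "unit_coord u $ 0 = 0" using h by (simp add: unit_coord_def)
  show "fps_to_fls (unit_coord u) = u - 1"
  proof (cases "u - 1 = 0")
    case False
    have "0 \<le> fls_subdegree (u - 1)" using h by (intro fls_subdegree_geI[OF False]) auto
    thus ?thesis unfolding unit_coord_def by (rule fls_regpart_to_fls_trivial)
  qed (simp add: unit_coord_def)
qed

lemma one_plus_fps_to_fls:
  fixes x :: "'a::field fps"
  assumes "x $ 0 = 0"
  shows "1 + fps_to_fls x \<in> one_units" "unit_coord (1 + fps_to_fls x) = x"
proof -
  have "small 1 (fps_to_fls x)" unfolding small_iff using assms by (auto simp: fps_to_fls_nth)
  thus "1 + fps_to_fls x \<in> one_units" by (simp add: one_units_def)
  show "unit_coord (1 + fps_to_fls x) = x" by (simp add: unit_coord_def)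
qed

lemma unit_coord_mult:
  assumes "u \<in> one_units" "v \<in> one_units"
  shows "u * v \<in> one_units" "unit_coord (u * v) = unit_coord u + unit_coord v + unit_coord u * unit_coord v"
proof -
  define w where "w = unit_coord u + unit_coord v + unit_coord u * unit_coord v"
  have "fps_to_fls w = fps_to_fls (unit_coord u) + fps_to_fls (unit_coord v)
      + fps_to_fls (unit_coord u) * fps_to_fls (unit_coord v)"
    unfolding w_def by (simp add: fls_times_fps_to_fls)
  hence uv: "u * v = 1 + fps_to_fls w"
    unfolding unit_coord(1)[OF assms(1)] unit_coord(1)[OF assms(2)] by (simp add: algebra_simps)
  have "w $ 0 = 0" using unit_coord(2)[OF assms(1)] unit_coord(2)[OF assms(2)] by (simp add: w_def)
  from one_plus_fps_to_fls[OF this] show "u * v \<in> one_units" "unit_coord (u * v) = w" unfolding uv .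
qed

lemma one_units_power: "u \<in> one_units \<Longrightarrow> u ^ n \<in> one_units"
  by (induction n) (auto simp: unit_coord_mult(1))

lemma eval_at_unit_in_one_units: "A $ 0 = 1 \<Longrightarrow> eval_at_unit A u \<in> one_units"
  using one_plus_fps_to_fls(1)[of "(A oo unit_coord u) - 1"] by (simp add: eval_at_unit_def)

lemma eval_at_unit_mult:
  assumes "formal_mult_hom A" "u \<in> one_units" "v \<in> one_units"
  shows "eval_at_unit A (u * v) = eval_at_unit A u * eval_at_unit A v"
  using formal_mult_homD[OF assms(1) unit_coord(2)[OF assms(2)] unit_coord(2)[OF assms(3)]]
  by (simp add: eval_at_unit_def unit_coord_mult(2)[OF assms(2,3)] fls_times_fps_to_fls)

lemma formal_mult_hom_if_eval_at_unit_mult: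
  fixes E :: "'a::field fps"
  assumes mult: "\<And>u v. u \<in> one_units \<Longrightarrow> v \<in> one_units \<Longrightarrow>
    eval_at_unit E (u * v) = eval_at_unit E u * eval_at_unit E v"
  shows "formal_mult_hom E"
  unfolding formal_mult_hom_def
proof (intro allI impI)
  fix x z :: "'a fps" assume x: "x$0 = 0" and z: "z$0 = 0"
  define u v where "u = 1 + fps_to_fls x" and "v = 1 + fps_to_fls z"
  have u: "u \<in> one_units" "unit_coord u = x" and v: "v \<in> one_units" "unit_coord v = z"
    unfolding u_def v_def using one_plus_fps_to_fls x z by blast+
  have "fps_to_fls (E oo (x + z + x * z)) = fps_to_fls ((E oo x) * (E oo z))"
    using mult[OF u(1) v(1)] unfolding eval_at_unit_def unit_coord_mult(2)[OF u(1) v(1)] u(2) v(2)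
    by (simp add: fls_times_fps_to_fls)
  thus "E oo (x + z + x * z) = (E oo x) * (E oo z)" by simp
qed

lemma eval_at_unit_compose:
  fixes A B :: "'a::field fps"
  assumes "B $ 0 = 1" "u \<in> one_units"
  shows "eval_at_unit A (eval_at_unit B u) = eval_at_unit (A oo (B - 1)) u"
proof -
  have "unit_coord (eval_at_unit B u) = (B - 1) oo unit_coord u"
    using one_plus_fps_to_fls(2)[of "(B oo unit_coord u) - 1"] assms(1)
    by (simp add: eval_at_unit_def fps_compose_sub_distrib)
  thus ?thesis using fps_compose_assoc[OF unit_coord(2)[OF assms(2)], of "B - 1" A] assms(1)
    by (simp add: eval_at_unit_def)
qed

lemma eval_at_unit_one_plus_X:
  assumes "u \<in> one_units" shows "eval_at_unit (1 + fps_X) u = (u :: 'a::field fls)"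
  using unit_coord[OF assms] by (simp add: eval_at_unit_def one_plus_X_compose)

lemma fls_sums_eval_at_unit:
  assumes "u \<in> one_units"
  shows "fls_sums (\<lambda>n. fls_const (A$n) * (u - 1) ^ n) (eval_at_unit A u)"
  using fls_sums_fps_compose[OF unit_coord(2)[OF assms], of A] unit_coord(1)[OF assms]
  by (simp add: eval_at_unit_def)

lemma eval_at_unit_power_CHAR_power:
  fixes A :: "'a::{field,finite} fps"
  assumes A: "fps_frob A = A" and u: "u \<in> one_units"
  shows "eval_at_unit A (u ^ (CHAR('a) ^ k)) = eval_at_unit A u ^ (CHAR('a) ^ k)"
proof -
  define q where "q = CHAR('a) ^ k"
  define x where "x = unit_coord u"
  have prime: "prime CHAR('a)" and prime': "prime CHAR('a fls)" and prime'': "prime CHAR('a fps)"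
    by (simp_all add: prime_CHAR_finite_field)
  have q0: "0 < q" unfolding q_def using prime prime_gt_0_nat by simp
  have x: "x $ 0 = 0" unfolding x_def by (rule unit_coord(2)[OF u])
  have "u ^ q = (1 + fps_to_fls x) ^ q" using unit_coord(1)[OF u] unfolding x_def by simp
  also have "\<dots> = 1 + fps_to_fls (x ^ q)"
    using freshmans_dream'[OF prime', of q k] unfolding q_def by (simp add: fps_to_fls_power)
  finally have xq: "unit_coord (u ^ q) = x ^ q"
    using one_plus_fps_to_fls(2)[of "x ^ q"] x q0 by (simp add: fps_power_zeroth)
  have "A ^ q = A oo fps_X ^ q" unfolding q_def
  proof (induction k)
    case (Suc k)
    have "A ^ CHAR('a) ^ Suc k = (A ^ CHAR('a) ^ k) ^ CHAR('a)"
      by (simp add: power_mult[symmetric] mult.commute)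
    also have "\<dots> = (A oo fps_X ^ CHAR('a) ^ k) ^ CHAR('a)" using Suc.IH by simp
    also have "\<dots> = A ^ CHAR('a) oo fps_X ^ CHAR('a) ^ k"
      by (rule fps_compose_power) (use prime prime_gt_0_nat in simp)
    also have "A ^ CHAR('a) = A oo fps_X ^ CHAR('a)" using fps_power_CHAR[OF prime, of A] A by simp
    finally show ?case
      using fps_compose_assoc[of "fps_X ^ CHAR('a) ^ k" "fps_X ^ CHAR('a)" A] prime prime_gt_0_nat
      by (simp add: fps_X_power_compose power_mult[symmetric] mult.commute)
  qed simp
  hence "(A oo x) ^ q = A oo x ^ q"
    using fps_compose_power[OF x, of A q] fps_compose_assoc[OF x, of "fps_X ^ q" A] q0
    by (simp add: fps_X_power_compose[OF x])
  thus ?thesis unfolding eval_at_unit_def xq q_def[symmetric] x_def[symmetric]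
    by (simp flip: fps_to_fls_power)
qed

section \<open>The power maps u \<mapsto> u^y\<close>

definition Zp_pow_map :: "(nat \<Rightarrow> int) \<Rightarrow> 'a::field fls \<Rightarrow> 'a fls" where
  "Zp_pow_map y = restrict (Zp_pow y) one_units"

lemma Zp_pow_map_eq:
  assumes "u \<in> one_units"
  shows "Zp_pow_map y u = eval_at_unit (Zp_binomial_fps y) (u :: 'a::{field,finite} fls)"
proof -
  have "(\<lambda>n. of_int (Zp_binom CHAR('a) y n 1) * (u - 1) ^ n)
      = (\<lambda>n. fls_const ((Zp_binomial_fps y :: 'a fps) $ n) * (u - 1) ^ n)"
    by (simp add: fls_of_int Zp_binomial_fps_def)
  thus ?thesis
    using the_fls_sums[OF fls_sums_eval_at_unit[OF assms]] assms by (simp add: Zp_pow_map_def Zp_pow_def)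
qed

lemma Zp_pow_map_in_one_units: "u \<in> one_units \<Longrightarrow> Zp_pow_map y (u :: 'a::{field,finite} fls) \<in> one_units"
  by (simp add: Zp_pow_map_eq eval_at_unit_in_one_units)

lemma Zp_pow_map_mult:
  assumes "y \<in> Zp CHAR('a)" "u \<in> one_units" "v \<in> one_units"
  shows "Zp_pow_map y (u * v) = Zp_pow_map y u * Zp_pow_map y (v :: 'a::{field,finite} fls)"
  using assms by (simp add: Zp_pow_map_eq unit_coord_mult eval_at_unit_mult formal_mult_hom_Zp_binomial_fps)

lemma Zp_pow_map_Zp_mult:
  assumes "y \<in> Zp CHAR('a)" "z \<in> Zp CHAR('a)" "u \<in> one_units"
  shows "Zp_pow_map (Zp_mult CHAR('a) y z) u = Zp_pow_map y (Zp_pow_map z (u :: 'a::{field,finite} fls))"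
  using assms Zp_pow_map_in_one_units[OF assms(3), of z]
  by (simp add: Zp_pow_map_eq Zp_binomial_fps_Zp_mult eval_at_unit_compose)

lemma Zp_pow_map_Zp_one:
  "u \<in> one_units \<Longrightarrow> Zp_pow_map (Zp_one CHAR('a)) u = (u :: 'a::{field,finite} fls)"
  by (simp add: Zp_pow_map_eq Zp_binomial_fps_Zp_one eval_at_unit_one_plus_X)

lemma Zp_pow_map_bij:
  assumes y: "y \<in> Zp_units CHAR('a)"
  shows "bij_betw (Zp_pow_map y) one_units (one_units :: 'a::{field,finite} fls set)"
proof -
  obtain z where z: "z \<in> Zp_units CHAR('a)" and yz: "Zp_mult CHAR('a) y z = Zp_one CHAR('a)"
    using Zp_units_inverse[OF y prime_CHAR_finite_field[where 'a='a]] by (elim bexE)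
  have zy: "Zp_mult CHAR('a) z y = Zp_one CHAR('a)" by (subst Zp_mult_commute) (rule yz)
  have yZ: "y \<in> Zp CHAR('a)" and zZ: "z \<in> Zp CHAR('a)" using y z unfolding Zp_units_def by blast+
  show ?thesis
  proof (rule bij_betwI[where g="Zp_pow_map z"])
    show "Zp_pow_map y \<in> one_units \<rightarrow> (one_units :: 'a fls set)"
      and "Zp_pow_map z \<in> one_units \<rightarrow> (one_units :: 'a fls set)"
      by (auto simp: Pi_iff intro!: Zp_pow_map_in_one_units)
    show "Zp_pow_map z (Zp_pow_map y u) = u" if "u \<in> one_units" for u :: "'a fls"
      using Zp_pow_map_Zp_mult[OF zZ yZ that, symmetric] Zp_pow_map_Zp_one[OF that] unfolding zy by simp
    show "Zp_pow_map y (Zp_pow_map z u) = u" if "u \<in> one_units" for u :: "'a fls"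
      using Zp_pow_map_Zp_mult[OF yZ zZ that, symmetric] Zp_pow_map_Zp_one[OF that] unfolding yz by simp
  qed
qed

lemma fls_ball_subset_one_units: "\<alpha> \<in> one_units \<Longrightarrow> fls_ball \<alpha> fls_X \<subseteq> one_units"
  unfolding fls_ball_def one_units_def using small_add[of 1 "_ - \<alpha>" "\<alpha> - 1"] by auto

lemma divide_in_one_units:
  fixes \<alpha> u :: "'a::field fls"
  assumes \<alpha>: "\<alpha> \<in> one_units" and u: "u \<in> fls_ball \<alpha> fls_X"
  shows "u / \<alpha> \<in> one_units" "u / \<alpha> - 1 = (u - \<alpha>) / \<alpha>"
proof -
  have "\<alpha> \<noteq> 0" "fls_subdegree \<alpha> = 0" using one_units_subdegree[OF \<alpha>] by auto
  thus eq: "u / \<alpha> - 1 = (u - \<alpha>) / \<alpha>" by (simp add: field_simps)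
  have "small (1 + 0) ((u - \<alpha>) * inverse \<alpha>)"
    using u \<open>fls_subdegree \<alpha> = 0\<close> by (intro small_mult) (simp_all add: fls_ball_def small_def)
  thus "u / \<alpha> \<in> one_units" using eq by (simp add: one_units_def divide_inverse)
qed

text \<open>Near \<alpha>, a multiplicative f is u \<mapsto> f(\<alpha>) A(u/\<alpha> - 1); in the variable (u - \<alpha>)/\<pi> its
  coefficients f(\<alpha>) A_n (\<pi>/\<alpha>)^n tend to 0.\<close>
lemma analytic_on_ball_eval_at_unit:
  fixes \<alpha> k :: "'a::field fls"
  assumes \<alpha>: "\<alpha> \<in> one_units" and k: "small 0 k"
  shows "analytic_on_ball (\<lambda>u. k * eval_at_unit A (u / \<alpha>)) \<alpha> fls_X"
  unfolding analytic_on_ball_def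
proof (intro exI conjI ballI)
  define c where "c n = k * (fls_const (A $ n) * (fls_X / \<alpha>) ^ n)" for n
  have "fls_subdegree \<alpha> = 0" using one_units_subdegree[OF \<alpha>] by auto
  hence "small 1 (fls_X / \<alpha>)"
    using small_mult[of 1 "fls_X :: 'a fls" 0 "inverse \<alpha>"] by (simp add: small_def divide_inverse)
  hence c: "small (0 + (0 + int n * 1)) (c n)" for n
    unfolding c_def by (intro small_mult k small_fls_const small_power)
  show "fls_lim c 0"
    unfolding fls_lim_def
  proof
    fix m
    have "small m (c n - 0)" if "nat m \<le> n" for n
      using c[of n] small_mono[of m "int n"] that by (simp add: nat_le_iff)
    thus "\<exists>N. \<forall>n\<ge>N. small m (c n - 0)" by blast
  qed
  fix u assume u: "u \<in> fls_ball \<alpha> fls_X"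
  have cancel: "b \<noteq> 0 \<Longrightarrow> (b / a) * (c / b) = c / a" for a b c :: "'a fls" by (simp add: field_simps)
  have "(fls_X / \<alpha>) * ((u - \<alpha>) / fls_X) = (u - \<alpha>) / \<alpha>" by (rule cancel) simp
  also have "\<dots> = u / \<alpha> - 1" by (rule divide_in_one_units(2)[OF \<alpha> u, symmetric])
  finally have "(fls_X / \<alpha>) * ((u - \<alpha>) / fls_X) = u / \<alpha> - 1" .
  with fls_sums_mult_left[OF fls_sums_eval_at_unit[OF divide_in_one_units(1)[OF \<alpha> u]], of k]
  show "fls_sums (\<lambda>n. c n * ((u - \<alpha>) / fls_X) ^ n) (k * eval_at_unit A (u / \<alpha>))"
    unfolding c_def by (simp add: power_mult_distrib[symmetric] mult.assoc)
qed

lemma Zp_pow_map_locally_analytic: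
  assumes y: "y \<in> Zp CHAR('a)"
  shows "locally_analytic_U (Zp_pow_map y :: 'a::{field,finite} fls \<Rightarrow> 'a fls)"
  unfolding locally_analytic_U_def
proof (intro ballI exI[of _ fls_X] conjI)
  fix \<alpha> :: "'a fls" assume \<alpha>: "\<alpha> \<in> one_units"
  show "fls_X \<noteq> (0 :: 'a fls)" "fls_ball \<alpha> fls_X \<subseteq> one_units"
    using fls_ball_subset_one_units[OF \<alpha>] by simp_all
  have "Zp_pow_map y u = Zp_pow_map y \<alpha> * eval_at_unit (Zp_binomial_fps y) (u / \<alpha>)"
    if "u \<in> fls_ball \<alpha> fls_X" for u
    using Zp_pow_map_mult[OF y \<alpha> divide_in_one_units(1)[OF \<alpha> that]] one_units_subdegree(1)[OF \<alpha>]
      divide_in_one_units(1)[OF \<alpha> that]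
    by (simp add: Zp_pow_map_eq)
  thus "analytic_on_ball (Zp_pow_map y) \<alpha> fls_X"
    using analytic_on_ball_eval_at_unit[OF \<alpha> one_units_subdegree(3)[OF Zp_pow_map_in_one_units[OF \<alpha>]]]
    unfolding analytic_on_ball_def by simp
qed

lemma Zp_pow_map_in_Lambda0:
  assumes y: "y \<in> Zp_units CHAR('a)"
  shows "(Zp_pow_map y :: 'a::{field,finite} fls \<Rightarrow> 'a fls) \<in> Lambda0"
proof -
  have yZ: "y \<in> Zp CHAR('a)" using y by (simp add: Zp_units_def)
  show ?thesis unfolding Lambda0_def
  proof (intro CollectI conjI ballI)
    show "Zp_pow_map y \<in> extensional one_units" by (simp add: Zp_pow_map_def)
    show "bij_betw (Zp_pow_map y) one_units (one_units :: 'a fls set)" by (rule Zp_pow_map_bij[OF y])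
    show "Zp_pow_map y (u * v) = Zp_pow_map y u * Zp_pow_map y v"
      if "u \<in> one_units" "v \<in> one_units" for u v :: "'a fls"
      by (rule Zp_pow_map_mult[OF yZ that])
    show "locally_analytic_U (Zp_pow_map y :: 'a fls \<Rightarrow> 'a fls)"
      by (rule Zp_pow_map_locally_analytic[OF yZ])
  qed
qed

lemma inj_on_Zp_pow_map: "inj_on (Zp_pow_map :: _ \<Rightarrow> 'a::{field,finite} fls \<Rightarrow> 'a fls) (Zp_units CHAR('a))"
proof (rule inj_onI)
  fix y y' assume y: "y \<in> Zp_units CHAR('a)" and y': "y' \<in> Zp_units CHAR('a)"
    and eq: "(Zp_pow_map y :: 'a fls \<Rightarrow> 'a fls) = Zp_pow_map y'"
  have "1 + fps_to_fls fps_X \<in> (one_units :: 'a fls set)" "unit_coord (1 + fps_to_fls fps_X) = (fps_X :: 'a fps)"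
    using one_plus_fps_to_fls[of "fps_X :: 'a fps"] by auto
  hence "fps_to_fls (Zp_binomial_fps y :: 'a fps) = fps_to_fls (Zp_binomial_fps y' :: 'a fps)"
    using fun_cong[OF eq, of "1 + fps_to_fls fps_X"] by (simp add: Zp_pow_map_eq eval_at_unit_def)
  thus "y = y'" using Zp_binomial_fps_inj y y' by (auto simp: Zp_units_def)
qed

section \<open>Locally analytic automorphisms of U\<close>

lemma Lambda0_in_one_units: "f \<in> Lambda0 \<Longrightarrow> u \<in> one_units \<Longrightarrow> f u \<in> one_units"
  unfolding Lambda0_def using bij_betwE by blast

lemma Lambda0_mult: "f \<in> Lambda0 \<Longrightarrow> u \<in> one_units \<Longrightarrow> v \<in> one_units \<Longrightarrow> f (u * v) = f u * f v"
  unfolding Lambda0_def by blast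

lemma Lambda0_1:
  fixes f :: "'a::field fls \<Rightarrow> 'a fls"
  assumes f: "f \<in> Lambda0" shows "f 1 = 1"
proof -
  have "f 1 * 1 = f 1 * f 1" using Lambda0_mult[OF f, of 1 1] by simp
  moreover have "f 1 \<noteq> 0" using one_units_subdegree(1)[OF Lambda0_in_one_units[OF f]] by simp
  ultimately show ?thesis by (metis mult_left_cancel)
qed

lemma Lambda0_power:
  fixes f :: "'a::field fls \<Rightarrow> 'a fls"
  assumes f: "f \<in> Lambda0" and u: "u \<in> one_units"
  shows "f (u ^ n) = f u ^ n"
proof (induction n)
  case (Suc n)
  thus ?case using Lambda0_mult[OF f u one_units_power[OF u, of n]] by simp
qed (simp add: Lambda0_1[OF f])

lemma locally_analytic_U_at_1:
  fixes f :: "'a::field fls \<Rightarrow> 'a fls"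
  assumes "locally_analytic_U f"
  obtains \<rho> B c where "\<rho> \<noteq> 0" "1 \<le> fls_subdegree \<rho>" "B \<le> 0" "\<And>n. small B (c n)"
    and "\<And>t. small 0 t \<Longrightarrow> 1 + \<rho> * t \<in> one_units"
    and "\<And>t. small 0 t \<Longrightarrow> fls_sums (\<lambda>n. c n * t ^ n) (f (1 + \<rho> * t))"
proof -
  obtain \<rho> where \<rho>: "\<rho> \<noteq> 0" "fls_ball 1 \<rho> \<subseteq> one_units" "analytic_on_ball f 1 \<rho>"
    using assms one_units_1 unfolding locally_analytic_U_def by blast
  obtain c where c: "fls_lim c 0" "\<forall>u\<in>fls_ball 1 \<rho>. fls_sums (\<lambda>n. c n * ((u - 1) / \<rho>) ^ n) (f u)"
    using \<rho>(3) unfolding analytic_on_ball_def by blast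
  define m where "m = fls_subdegree \<rho>"
  have m: "1 \<le> m"
  proof (rule ccontr)
    assume "\<not> 1 \<le> m"
    hence "(0::'a fls) \<in> fls_ball 1 \<rho>" by (simp add: fls_ball_def RK_def small_def m_def)
    thus False using \<rho>(2) by (auto simp: one_units_def small_def)
  qed
  have ball: "1 + \<rho> * t \<in> fls_ball 1 \<rho>" if t: "small 0 t" for t
  proof -
    have \<rho>t: "small (m + 0) (\<rho> * t)" by (rule small_mult[OF _ t]) (simp add: small_def m_def)
    hence "small 0 (\<rho> * t)" using m small_mono[of 0 "m + 0"] by simp
    hence "small 0 (1 + \<rho> * t)" by (intro small_add) (simp_all add: small_def)
    thus ?thesis using \<rho>t by (simp add: fls_ball_def RK_def m_def)
  qed
  obtain B where "B \<le> 0" "\<forall>n. small B (c n)" using fls_lim_zero_bounded[OF c(1)] by blast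
  moreover have "fls_sums (\<lambda>n. c n * t ^ n) (f (1 + \<rho> * t))" if "small 0 t" for t
    using c(2) ball[OF that] \<rho>(1) by fastforce
  ultimately show ?thesis using that \<rho>(1,2) ball m unfolding m_def by blast
qed

text \<open>Compare the expansions of f(u^p) and f(u)^p at the points t = \<pi>^j, using
  u^p = 1 + \<rho> (\<rho>^(p-1) t^p).\<close>
lemma Lambda0_coeffs_power_CHAR:
  fixes f :: "'a::{field,finite} fls \<Rightarrow> 'a fls"
  assumes f: "f \<in> Lambda0" and \<rho>: "1 \<le> fls_subdegree \<rho>" and B: "B \<le> 0" "\<And>n. small B (c n)"
    and U: "\<And>t. small 0 t \<Longrightarrow> 1 + \<rho> * t \<in> one_units"
    and S: "\<And>t. small 0 t \<Longrightarrow> fls_sums (\<lambda>n. c n * t ^ n) (f (1 + \<rho> * t))"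
  shows "c n ^ CHAR('a) = c n * \<rho> ^ ((CHAR('a) - 1) * n)"
proof -
  define p where "p = CHAR('a)"
  have p2: "2 \<le> p" unfolding p_def by (rule CHAR_finite_field_ge_2)
  have prime: "prime CHAR('a fls)" by (simp add: prime_CHAR_finite_field)
  have \<rho>0: "small 0 \<rho>" using \<rho> by (simp add: small_def)
  define d where "d n = c n * \<rho> ^ ((p - 1) * n) - c n ^ p" for n
  have "small (int p * B) (d n)" for n
  proof -
    have "int p * B \<le> 1 * B" by (rule mult_right_mono_neg) (use p2 B(1) in auto)
    hence "int p * B \<le> B + int ((p - 1) * n) * 0" by simp
    from small_mono[OF this small_mult[OF B(2) small_power[OF \<rho>0]]]
    have "small (int p * B) (c n * \<rho> ^ ((p - 1) * n))" .
    thus ?thesis unfolding d_def by (intro small_diff small_power B(2))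
  qed
  moreover have "fls_sums (\<lambda>n. d n * (fls_X ^ (p * j)) ^ n) 0" for j
  proof -
    define t where "t = (fls_X ^ j :: 'a fls)"
    define t' where "t' = \<rho> ^ (p - 1) * t ^ p"
    have t: "small 0 t" unfolding t_def by (simp add: small_def)
    have t': "small 0 t'" using small_mult[OF small_power[OF \<rho>0] small_power[OF t]] by (simp add: t'_def)
    have "\<rho> ^ p = \<rho> * \<rho> ^ (p - 1)" using p2 by (simp flip: power_Suc)
    hence "(1 + \<rho> * t) ^ p = 1 + \<rho> * t'"
      using freshmans_dream[OF prime refl, of 1 "\<rho> * t"]
      by (simp add: p_def t'_def power_mult_distrib mult_ac)
    hence "f (1 + \<rho> * t') = f (1 + \<rho> * t) ^ p" using Lambda0_power[OF f U[OF t], of p] by simp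
    hence "fls_sums (\<lambda>n. c n * t' ^ n - (c n * t ^ n) ^ p) 0"
      using fls_sums_diff[OF S[OF t'] fls_sums_power_CHAR[OF S[OF t]]] unfolding p_def by simp
    moreover have "c n * t' ^ n - (c n * t ^ n) ^ p = d n * (fls_X ^ (p * j)) ^ n" for n
      unfolding d_def t'_def t_def
      by (simp add: power_mult_distrib power_mult[symmetric] mult_ac right_diff_distrib)
    ultimately show ?thesis by simp
  qed
  ultimately have "d n = 0" using p2 by (intro fls_power_series_eq_0[where q=p]) auto
  thus ?thesis unfolding d_def p_def by simp
qed

text \<open>Hence the Taylor coefficients c_n/\<rho>^n of f at 1 are Frobenius-fixed, i.e. constants in \<FF>_p.\<close>
lemma Lambda0_eq_eval_at_unit_near_1:
  fixes f :: "'a::{field,finite} fls \<Rightarrow> 'a fls"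
  assumes f: "f \<in> Lambda0"
  shows "\<exists>E m. fps_frob E = E \<and> (\<forall>u\<in>one_units. small m (u - 1) \<longrightarrow> f u = eval_at_unit E u)"
proof -
  have "locally_analytic_U f" using f by (simp add: Lambda0_def)
  from locally_analytic_U_at_1[OF this] obtain \<rho> B c where \<rho>: "\<rho> \<noteq> 0" "1 \<le> fls_subdegree \<rho>" and B: "B \<le> 0" "\<And>n. small B (c n)"
    and U: "\<And>t. small 0 t \<Longrightarrow> 1 + \<rho> * t \<in> one_units"
    and S: "\<And>t. small 0 t \<Longrightarrow> fls_sums (\<lambda>n. c n * t ^ n) (f (1 + \<rho> * t))"
    by blast
  define p where "p = CHAR('a)"
  have p2: "2 \<le> p" unfolding p_def by (rule CHAR_finite_field_ge_2)
  define a where "a n = c n / \<rho> ^ n" for n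
  have "a n ^ p = a n" for n
  proof -
    have "(\<rho> ^ n) ^ p = \<rho> ^ ((p - 1) * n) * \<rho> ^ n"
      using p2 by (simp add: power_mult[symmetric] power_add[symmetric] algebra_simps)
    thus ?thesis
      using Lambda0_coeffs_power_CHAR[OF f \<rho>(2) B U S, of n] \<rho>(1)
      unfolding a_def p_def by (simp add: power_divide)
  qed
  hence a: "a n = fls_const (a n $$ 0)" "(a n $$ 0) ^ p = a n $$ 0" for n
    using fls_power_CHAR_eq_self[OF prime_CHAR_finite_field] unfolding p_def by blast+
  define E where "E = Abs_fps (\<lambda>n. a n $$ 0)"
  have "fps_frob E = E" by (rule fps_ext) (simp add: fps_frob_def E_def a(2)[unfolded p_def])
  moreover have "f u = eval_at_unit E u" if u: "u \<in> one_units" "small (fls_subdegree \<rho>) (u - 1)" for u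
  proof -
    define t where "t = (u - 1) / \<rho>"
    have "small (fls_subdegree \<rho> + - fls_subdegree \<rho>) ((u - 1) * inverse \<rho>)"
      by (intro small_mult u(2)) (simp add: small_def)
    hence t: "small 0 t" by (simp add: t_def divide_inverse)
    have ut: "u = 1 + \<rho> * t" unfolding t_def using \<rho>(1) by simp
    have "c n * t ^ n = fls_const (E $ n) * (u - 1) ^ n" for n
      using a(1)[of n] \<rho>(1) by (simp add: ut a_def E_def power_mult_distrib field_simps)
    hence "fls_sums (\<lambda>n. fls_const (E $ n) * (u - 1) ^ n) (f u)" using S[OF t] ut by simp
    thus ?thesis using fls_sums_eval_at_unit[OF u(1)] fls_sums_unique by blast
  qed
  ultimately show ?thesis by blast
qed

text \<open>u^(p^K) lies in any prescribed neighbourhood of 1, both sides commute with the Frobenius, and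
  the Frobenius is injective.\<close>
lemma Lambda0_eq_eval_at_unit:
  fixes f :: "'a::{field,finite} fls \<Rightarrow> 'a fls"
  assumes f: "f \<in> Lambda0"
  shows "\<exists>E. formal_mult_hom E \<and> E$0 = 1 \<and> (\<forall>u\<in>one_units. f u = eval_at_unit E u)"
proof -
  obtain E m where E: "fps_frob E = E" and near: "\<And>u. u \<in> one_units \<Longrightarrow> small m (u - 1) \<Longrightarrow> f u = eval_at_unit E u"
    using Lambda0_eq_eval_at_unit_near_1[OF f] by blast
  define q where "q = CHAR('a) ^ nat m"
  have "nat m < q" unfolding q_def by (rule less_power_self[OF CHAR_finite_field_ge_2])
  hence mq: "m \<le> int q * 1" by linarith
  have all: "f u = eval_at_unit E u" if u: "u \<in> one_units" for u
  proof -
    have "(u - 1 + 1) ^ q = (u - 1) ^ q + 1 ^ q"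
      by (rule freshmans_dream') (simp_all add: prime_CHAR_finite_field q_def)
    hence "u ^ q - 1 = (u - 1) ^ q" by simp
    moreover have "small (int q * 1) ((u - 1) ^ q)" by (rule small_power) (use u in \<open>simp add: one_units_def\<close>)
    ultimately have "small m (u ^ q - 1)" using small_mono[OF mq] by simp
    hence "f (u ^ q) = eval_at_unit E (u ^ q)" by (rule near[OF one_units_power[OF u]])
    hence "f u ^ q = eval_at_unit E u ^ q"
      unfolding Lambda0_power[OF f u] q_def eval_at_unit_power_CHAR_power[OF E u] .
    thus ?thesis unfolding q_def
      using power_CHAR_power_inj[where 'a="'a fls" and k="nat m" and x="f u" and y="eval_at_unit E u"]
      by (simp add: prime_CHAR_finite_field)
  qed
  have "formal_mult_hom E"
  proof (rule formal_mult_hom_if_eval_at_unit_mult)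
    fix u v :: "'a fls" assume u: "u \<in> one_units" and v: "v \<in> one_units"
    show "eval_at_unit E (u * v) = eval_at_unit E u * eval_at_unit E v"
      using all[OF unit_coord_mult(1)[OF u v]] all[OF u] all[OF v] Lambda0_mult[OF f u v] by simp
  qed
  moreover have "E$0 = 1"
    using all[OF one_units_1] Lambda0_1[OF f] by (simp add: eval_at_unit_def unit_coord_def)
  ultimately show ?thesis using all by blast
qed

lemma eval_at_unit_surj_imp_coeff_1:
  fixes E :: "'a::field fps"
  assumes "1 + fls_X \<in> eval_at_unit E ` one_units"
  shows "E $ 1 \<noteq> 0"
proof
  assume E1: "E $ 1 = 0"
  obtain u where u: "u \<in> one_units" "eval_at_unit E u = 1 + fls_X" using assms by auto
  have "(E oo unit_coord u) $ 1 = 0" using E1 unit_coord(2)[OF u(1)] by (simp add: fps_compose_nth)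
  hence "eval_at_unit E u $$ 1 = 0" by (simp add: eval_at_unit_def)
  thus False using u(2) by simp
qed

lemma Lambda0_eq_Zp_pow_map:
  fixes f :: "'a::{field,finite} fls \<Rightarrow> 'a fls"
  assumes f: "f \<in> Lambda0"
  shows "\<exists>y\<in>Zp_units CHAR('a). f = Zp_pow_map y"
proof -
  obtain E where E: "formal_mult_hom E" "E$0 = 1" and fE: "\<forall>u\<in>one_units. f u = eval_at_unit E u"
    using Lambda0_eq_eval_at_unit[OF f] by blast
  define y where "y = formal_mult_hom_exponent E"
  have yZ: "y \<in> Zp CHAR('a)" unfolding y_def by (rule formal_mult_hom_exponent_Zp[OF E])
  have "y 1 \<noteq> 0"
  proof
    assume "y 1 = 0"
    hence "E $ 1 = 0" using formal_mult_hom_exponent(2)[OF E, of 1] CHAR_finite_field_ge_2[where 'a='a]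
      by (simp add: y_def one_plus_X_power_nth)
    moreover have "1 + fls_X \<in> f ` one_units"
      using f one_plus_fps_to_fls(1)[of "fps_X :: 'a fps"] by (simp add: Lambda0_def bij_betw_def)
    hence "1 + fls_X \<in> eval_at_unit E ` one_units" using fE by auto
    ultimately show False using eval_at_unit_surj_imp_coeff_1 by blast
  qed
  hence "y \<in> Zp_units CHAR('a)" using yZ by (simp add: Zp_units_def)
  moreover have "f = Zp_pow_map y"
  proof
    fix u
    show "f u = Zp_pow_map y u"
      using f fE Zp_binomial_fps_formal_mult_hom_exponent[OF E] Zp_pow_map_eq[of u y]
      by (cases "u \<in> one_units") (auto simp: Lambda0_def Zp_pow_map_def extensional_def y_def)
  qed
  ultimately show ?thesis by blast
qed

lemma Zp_pow_map_hom:
  "Zp_pow_map \<in> hom (Zp_units_group CHAR('a)) (Lambda0_group :: ('a::{field,finite} fls \<Rightarrow> 'a fls) monoid)"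
proof (rule homI)
  fix y z assume "y \<in> carrier (Zp_units_group CHAR('a))" "z \<in> carrier (Zp_units_group CHAR('a))"
  hence y: "y \<in> Zp_units CHAR('a)" and z: "z \<in> Zp_units CHAR('a)" by (simp_all add: Zp_units_group_def)
  hence yZ: "y \<in> Zp CHAR('a)" and zZ: "z \<in> Zp CHAR('a)" by (simp_all add: Zp_units_def)
  show "Zp_pow_map (y \<otimes>\<^bsub>Zp_units_group CHAR('a)\<^esub> z)
      = (Zp_pow_map y \<otimes>\<^bsub>Lambda0_group\<^esub> Zp_pow_map z :: 'a fls \<Rightarrow> 'a fls)"
  proof
    fix u :: "'a fls"
    show "Zp_pow_map (y \<otimes>\<^bsub>Zp_units_group CHAR('a)\<^esub> z) u = (Zp_pow_map y \<otimes>\<^bsub>Lambda0_group\<^esub> Zp_pow_map z) u"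
      using Zp_pow_map_Zp_mult[OF yZ zZ, of u]
      by (cases "u \<in> one_units") (simp_all add: Zp_units_group_def Lambda0_group_def Zp_pow_map_def)
  qed
qed (simp add: Zp_units_group_def Lambda0_group_def Zp_pow_map_in_Lambda0)

theorem corollary1p2:
  shows "(\<lambda>y. restrict (Zp_pow y) (one_units :: ('a::{field,finite}) fls set))
           \<in> iso (Zp_units_group CHAR('a)) (Lambda0_group :: ('a fls \<Rightarrow> 'a fls) monoid)"
proof -
  have "(\<lambda>y. restrict (Zp_pow y) (one_units :: 'a fls set)) = Zp_pow_map"
    by (simp add: Zp_pow_map_def fun_eq_iff)
  moreover have "Zp_pow_map ` Zp_units CHAR('a) = (Lambda0 :: ('a fls \<Rightarrow> 'a fls) set)"
    using Zp_pow_map_in_Lambda0 Lambda0_eq_Zp_pow_map by blast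
  ultimately show ?thesis
    using Zp_pow_map_hom inj_on_Zp_pow_map
    by (simp add: iso_def bij_betw_def Zp_units_group_def Lambda0_group_def)
qed

end
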